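(* For any two symmetric scoring functions $S,T$, there exists a deterministic compact convex set $\mathrm{SET}_{S,T}\subset\mathbb{R}^2$ such that $d_H(\mathrm{SET}^n_{S,T},\mathrm{SET}_{S,T})\to0$ almost surely as $n\to\infty$; moreover, for every $(a,b)\in\mathbb{R}^2$, $\max_{(x,y)\in\mathrm{SET}^n_{S,T}}(ax+by)=L_{n,aS+bT}/n\to\lambda_{aS+bT}$ almost surely.
   Context: $\mathcal{A}$ finite alphabet, $\mathcal{A}^*=\mathcal{A}\cup\{G\}$ with gap symbol $G$. A symmetric scoring function is $R:\mathcal{A}^*\times\mathcal{A}^*\to\mathbb{R}$ with $R(a,b)=R(b,a)$, $R(G,G)=0$. An alignment of $x_{[1,n]},y_{[1,n]}$ is a pair of increasing sequences $1\le i_1<\dots<i_k\le n$, $1\le j_1<\dots<j_k\le n$; $\Lambda_n$ is the set of them; its score is $R_\nu(x_{[1,n]},y_{[1,n]})=\sum_{\ell}R(x_{i_\ell},y_{j_\ell})+\sum_{i\notin\{i_\ell\}}R(x_i,G)+\sum_{j\notin\{j_\ell\}}R(G,y_j)$. $X_1,X_2,\dots,Y_1,Y_2,\dots$ are i.i.d. random letters from a fixed distribution on $\mathcal{A}$; $L_{n,R}=\max_{\nu\in\Lambda_n}R_\nu(X_{[1,n]},Y_{[1,n]})$; $\lambda_R$ is the deterministic a.s. limit of $L_{n,R}/n$. $\mathrm{SET}^n_{S,T}$ is the closed convex hull of $\{(S_\nu(X_{[1,n]},Y_{[1,n]})/n,\,T_\nu(X_{[1,n]},Y_{[1,n]})/n):\nu\in\Lambda_n\}$.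 $d_H$ is the Hausdorff distance with respect to the Euclidean metric. *)

theory Defs
  imports "HOL-Probability.Probability"
begin

text \<open>Letters of the extended alphabet: \<open>Some a\<close> is the letter a, \<open>None\<close> is the gap symbol G.\<close>

definition symmetric_scoring :: "('a option \<Rightarrow> 'a option \<Rightarrow> real) \<Rightarrow> bool" where
  "symmetric_scoring R \<longleftrightarrow> (\<forall>u v. R u v = R v u) \<and> R None None = 0"

definition alignments :: "nat \<Rightarrow> (nat list \<times> nat list) set" where
  "alignments n = {(is, js). length is = length js \<and> sorted_wrt (<) is \<and> sorted_wrt (<) js
      \<and> set is \<subseteq> {1..n} \<and> set js \<subseteq> {1..n}}"

definition align_score ::
  "('a option \<Rightarrow> 'a option \<Rightarrow> real) \<Rightarrow> nat \<Rightarrow> (nat \<Rightarrow> 'a) \<Rightarrow> (nat \<Rightarrow> 'a) \<Rightarrow> nat list \<times> nat list \<Rightarrow> real" where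
  "align_score R n x y \<nu> = (case \<nu> of (is, js) \<Rightarrow>
      (\<Sum>l<length is. R (Some (x (is ! l))) (Some (y (js ! l))))
      + (\<Sum>i\<in>{1..n} - set is. R (Some (x i)) None)
      + (\<Sum>j\<in>{1..n} - set js. R None (Some (y j))))"

definition opt_score ::
  "('a option \<Rightarrow> 'a option \<Rightarrow> real) \<Rightarrow> nat \<Rightarrow> (nat \<Rightarrow> 'a) \<Rightarrow> (nat \<Rightarrow> 'a) \<Rightarrow> real" where
  "opt_score R n x y = Max (align_score R n x y ` alignments n)"

definition score_set ::
  "('a option \<Rightarrow> 'a option \<Rightarrow> real) \<Rightarrow> ('a option \<Rightarrow> 'a option \<Rightarrow> real)
     \<Rightarrow> nat \<Rightarrow> (nat \<Rightarrow> 'a) \<Rightarrow> (nat \<Rightarrow> 'a) \<Rightarrow> (real \<times> real) set" where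
  "score_set S T n x y = closure (convex hull
      ((\<lambda>\<nu>. (align_score S n x y \<nu> / real n, align_score T n x y \<nu> / real n)) ` alignments n))"

text \<open>Hausdorff distance w.r.t. the Euclidean metric (used for nonempty bounded sets).\<close>
definition hausdist :: "'a::metric_space set \<Rightarrow> 'a set \<Rightarrow> real" where
  "hausdist A B = max (SUP x\<in>A. infdist x B) (SUP y\<in>B. infdist y A)"

definition lcs_const ::
  "'w measure \<Rightarrow> (nat \<Rightarrow> 'w \<Rightarrow> 'a) \<Rightarrow> (nat \<Rightarrow> 'w \<Rightarrow> 'a) \<Rightarrow> ('a option \<Rightarrow> 'a option \<Rightarrow> real) \<Rightarrow> real" where
  "lcs_const M X Y R =
     (THE l. AE w in M. (\<lambda>n. opt_score R n (\<lambda>i. X i w) (\<lambda>j. Y j w) / real n) \<longlonglongrightarrow> l)"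

end

theory Submission
  imports Defs "HOL-Library.Discrete_Functions"
begin

text \<open>The points of \<open>SET\<^sup>n\<close> are convex combinations of the normalized score pairs of alignments,
  so the support function of \<open>SET\<^sup>n\<close> in direction \<open>(a, b)\<close> is \<open>L(n, aS + bT) / n\<close>. Concatenating
  alignments makes \<open>L(n, R)\<close> superadditive, so its mean grows linearly (Fekete); changing one letter
  changes it by \<open>O(1)\<close>, so by Efron--Stein its variance is \<open>O(n)\<close>; Chebyshev and Borel--Cantelli along
  the squares, followed by interpolation, give \<open>L(n, R) / n \<longrightarrow> \<lambda>(R)\<close> almost surely. The support
  functions are uniformly Lipschitz in the direction, so convergence on a countable dense set of
  directions is uniform on the unit circle, and uniform convergence of support functions of compact
  convex sets gives Hausdorff convergence to the intersection of the half-planes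
  \<open>v \<bullet> z \<le> \<lambda>(v\<^sub>1 S + v\<^sub>2 T)\<close>, \<open>|v| = 1\<close>.\<close>

section \<open>Alignments\<close>

lemma alignment_length_le:
  assumes "(is, js) \<in> alignments n"
  shows "length is \<le> n" and "length js \<le> n"
proof -
  have "length xs \<le> n" if "sorted_wrt (<) xs" "set xs \<subseteq> {1..n}" for xs :: "nat list"
  proof -
    have "length xs = card (set xs)"
      using that(1) by (simp add: strict_sorted_iff distinct_card)
    also have "\<dots> \<le> card {1..n}"
      using that(2) by (intro card_mono) auto
    finally show ?thesis by simp
  qed
  then show "length is \<le> n" "length js \<le> n"
    using assms by (auto simp: alignments_def)
qed

lemma finite_alignments: "finite (alignments n)"
proof (rule finite_subset)
  let ?L = "{xs. set xs \<subseteq> {1..n} \<and> length xs \<le> n}"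
  show "alignments n \<subseteq> ?L \<times> ?L"
    using alignment_length_le by (force simp: alignments_def)
  show "finite (?L \<times> ?L)"
    by (intro finite_cartesian_product finite_lists_length_le) auto
qed

lemma alignments_nonempty: "alignments n \<noteq> {}"
proof -
  have "([], []) \<in> alignments n" by (simp add: alignments_def)
  then show ?thesis by blast
qed

lemma align_score_abs_le:
  assumes R: "\<And>u v. \<bar>R u v\<bar> \<le> C" and \<nu>: "\<nu> \<in> alignments n"
  shows "\<bar>align_score R n x y \<nu>\<bar> \<le> 3 * real n * C"
proof -
  obtain "is" js where \<nu>_eq: "\<nu> = (is, js)" by fastforce
  have "0 \<le> C" using R[of None None] by simp
  have sum_le: "\<bar>\<Sum>k\<in>A. f k\<bar> \<le> real n * C" if "card A \<le> n" "\<And>k. \<bar>f k\<bar> \<le> C"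
    for A :: "nat set" and f :: "nat \<Rightarrow> real"
  proof -
    have "\<bar>\<Sum>k\<in>A. f k\<bar> \<le> (\<Sum>k\<in>A. C)"
      by (rule order_trans[OF sum_abs sum_mono]) (rule that(2))
    also have "\<dots> = real (card A) * C" by simp
    also have "\<dots> \<le> real n * C"
      using that(1) \<open>0 \<le> C\<close> by (intro mult_right_mono) auto
    finally show ?thesis .
  qed
  have gaps: "card ({1..n} - A) \<le> n" for A :: "nat set"
    using card_mono[of "{1..n}" "{1..n} - A"] by auto
  have "\<bar>\<Sum>l<length is. R (Some (x (is ! l))) (Some (y (js ! l)))\<bar> \<le> real n * C"
    using alignment_length_le(1)[of "is" js n] \<nu> R by (intro sum_le) (auto simp: \<nu>_eq)
  moreover have "\<bar>\<Sum>i\<in>{1..n} - set is. R (Some (x i)) None\<bar> \<le> real n * C"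
    using gaps R by (intro sum_le)
  moreover have "\<bar>\<Sum>j\<in>{1..n} - set js. R None (Some (y j))\<bar> \<le> real n * C"
    using gaps R by (intro sum_le)
  ultimately show ?thesis
    unfolding \<nu>_eq align_score_def by (simp add: abs_le_iff)
qed

lemma align_score_linear:
  "align_score (\<lambda>u v. a * R u v + b * R' u v) n x y \<nu>
     = a * align_score R n x y \<nu> + b * align_score R' n x y \<nu>"
  by (cases \<nu>) (simp add: align_score_def sum.distrib sum_distrib_left algebra_simps)

lemma align_score_diff:
  "align_score (\<lambda>u v. R u v - R' u v) n x y \<nu> = align_score R n x y \<nu> - align_score R' n x y \<nu>"
  by (cases \<nu>) (simp add: align_score_def sum_subtractf)

lemma align_score_swap:
  "length is = length js \<Longrightarrow> align_score R n x y (is, js) = align_score (\<lambda>u v. R v u) n y x (js, is)"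
  by (simp add: align_score_def)

lemma align_score_cong:
  assumes "\<nu> \<in> alignments n" "\<And>i. i \<in> {1..n} \<Longrightarrow> x i = x' i" "\<And>j. j \<in> {1..n} \<Longrightarrow> y j = y' j"
  shows "align_score R n x y \<nu> = align_score R n x' y' \<nu>"
proof -
  obtain "is" js where \<nu>_eq: "\<nu> = (is, js)" by fastforce
  have "set is \<subseteq> {1..n}" "set js \<subseteq> {1..n}" "length is = length js"
    using assms(1) by (auto simp: \<nu>_eq alignments_def)
  then have "R (Some (x (is ! l))) (Some (y (js ! l))) = R (Some (x' (is ! l))) (Some (y' (js ! l)))"
    if "l < length is" for l
    using that assms(2,3) by (metis nth_mem subsetD)
  moreover have "(\<Sum>i\<in>{1..n} - set is. R (Some (x i)) None) = (\<Sum>i\<in>{1..n} - set is. R (Some (x' i)) None)"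
    "(\<Sum>j\<in>{1..n} - set js. R None (Some (y j))) = (\<Sum>j\<in>{1..n} - set js. R None (Some (y' j)))"
    using assms(2,3) by (auto intro: sum.cong)
  ultimately show ?thesis
    unfolding \<nu>_eq align_score_def by simp
qed

lemma opt_score_cong:
  "(\<And>i. i \<in> {1..n} \<Longrightarrow> x i = x' i) \<Longrightarrow> (\<And>j. j \<in> {1..n} \<Longrightarrow> y j = y' j)
    \<Longrightarrow> opt_score R n x y = opt_score R n x' y'"
  unfolding opt_score_def by (intro arg_cong[where f=Max] image_cong refl align_score_cong) auto

lemma align_score_le_opt_score: "\<nu> \<in> alignments n \<Longrightarrow> align_score R n x y \<nu> \<le> opt_score R n x y"
  unfolding opt_score_def using finite_alignments by (intro Max_ge) auto

lemma opt_score_attained: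
  obtains \<nu> where "\<nu> \<in> alignments n" "opt_score R n x y = align_score R n x y \<nu>"
proof -
  have "opt_score R n x y \<in> align_score R n x y ` alignments n"
    unfolding opt_score_def by (rule Max_in) (simp_all add: finite_alignments alignments_nonempty)
  then show ?thesis using that by blast
qed

lemma opt_score_abs_le: "(\<And>u v. \<bar>R u v\<bar> \<le> C) \<Longrightarrow> \<bar>opt_score R n x y\<bar> \<le> 3 * real n * C"
  by (metis opt_score_attained align_score_abs_le)

lemma abs_Max_image_diff_le:
  fixes f g :: "'b \<Rightarrow> real"
  assumes "finite A" "A \<noteq> {}" "\<And>a. a \<in> A \<Longrightarrow> \<bar>f a - g a\<bar> \<le> c"
  shows "\<bar>Max (f ` A) - Max (g ` A)\<bar> \<le> c"
proof -
  have "Max (f ` A) \<in> f ` A" "Max (g ` A) \<in> g ` A"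
    using assms(1,2) by (intro Max_in; simp)+
  then obtain a b where a: "a \<in> A" "Max (f ` A) = f a" and b: "b \<in> A" "Max (g ` A) = g b"
    by auto
  have "f b \<le> f a" "g a \<le> g b"
    using a b assms(1) Max_ge[of "f ` A" "f b"] Max_ge[of "g ` A" "g a"] by auto
  with a b assms(3)[OF a(1)] assms(3)[OF b(1)] show ?thesis by linarith
qed

lemma opt_score_diff_abs_le:
  assumes "\<And>u v. \<bar>R u v - R' u v\<bar> \<le> c"
  shows "\<bar>opt_score R n x y - opt_score R' n x y\<bar> \<le> 3 * real n * c"
  unfolding opt_score_def
  using align_score_abs_le[of "\<lambda>u v. R u v - R' u v", OF assms]
  by (intro abs_Max_image_diff_le finite_alignments alignments_nonempty) (simp add: align_score_diff)

lemma abs_sum_le_if_at_most_one_nonzero: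
  fixes f :: "'b \<Rightarrow> real"
  assumes "finite A" "card {a\<in>A. f a \<noteq> 0} \<le> 1" "\<And>a. a \<in> A \<Longrightarrow> \<bar>f a\<bar> \<le> B" "0 \<le> B"
  shows "\<bar>sum f A\<bar> \<le> B"
proof -
  have "sum f A = sum f {a\<in>A. f a \<noteq> 0}"
    using assms(1) by (intro sum.mono_neutral_right) auto
  also have "\<bar>\<dots>\<bar> \<le> (\<Sum>a\<in>{a\<in>A. f a \<noteq> 0}. B)"
    by (rule order_trans[OF sum_abs sum_mono]) (use assms(3) in auto)
  also have "\<dots> = real (card {a\<in>A. f a \<noteq> 0}) * B" by simp
  also have "\<dots> \<le> 1 * B"
    using assms(2,4) by (intro mult_right_mono) auto
  finally show ?thesis by simp
qed

text \<open>The changed letter enters at most one term of the matched sum and at most one term of the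
  gap sum.\<close>

lemma align_score_update_left:
  assumes R: "\<And>u v. \<bar>R u v\<bar> \<le> C" and \<nu>: "\<nu> \<in> alignments n"
  shows "\<bar>align_score R n (x(i := a)) y \<nu> - align_score R n x y \<nu>\<bar> \<le> 4 * C"
proof -
  obtain "is" js where \<nu>_eq: "\<nu> = (is, js)" by fastforce
  have "0 \<le> C" using R[of None None] by simp
  have "distinct is" using \<nu> by (auto simp: \<nu>_eq alignments_def strict_sorted_iff)
  define f where
    "f l = R (Some ((x(i := a)) (is ! l))) (Some (y (js ! l))) - R (Some (x (is ! l))) (Some (y (js ! l)))"
    for l
  define g where "g k = R (Some ((x(i := a)) k)) None - R (Some (x k)) None" for k
  have "\<bar>sum f {..<length is}\<bar> \<le> 2 * C"
  proof (rule abs_sum_le_if_at_most_one_nonzero)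
    have "{l \<in> {..<length is}. f l \<noteq> 0} \<subseteq> {l. l < length is \<and> is ! l = i}"
      by (auto simp: f_def)
    moreover have "card {l. l < length is \<and> is ! l = i} \<le> 1"
      using \<open>distinct is\<close> by (auto simp: card_le_Suc0_iff_eq nth_eq_iff_index_eq)
    moreover have "finite {l. l < length is \<and> is ! l = i}" by simp
    ultimately show "card {l \<in> {..<length is}. f l \<noteq> 0} \<le> 1"
      using card_mono order_trans by blast
    show "\<bar>f l\<bar> \<le> 2 * C" for l
      using R[of "Some ((x(i := a)) (is ! l))" "Some (y (js ! l))"] R[of "Some (x (is ! l))" "Some (y (js ! l))"]
      unfolding f_def by linarith
  qed (use \<open>0 \<le> C\<close> in auto)
  moreover have "\<bar>sum g ({1..n} - set is)\<bar> \<le> 2 * C"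
  proof (rule abs_sum_le_if_at_most_one_nonzero)
    have "{k \<in> {1..n} - set is. g k \<noteq> 0} \<subseteq> {i}" by (auto simp: g_def)
    then have "card {k \<in> {1..n} - set is. g k \<noteq> 0} \<le> card {i}"
      by (intro card_mono) auto
    then show "card {k \<in> {1..n} - set is. g k \<noteq> 0} \<le> 1" by simp
    show "\<bar>g k\<bar> \<le> 2 * C" for k
      using R[of "Some ((x(i := a)) k)" None] R[of "Some (x k)" None] unfolding g_def by linarith
  qed (use \<open>0 \<le> C\<close> in auto)
  moreover have "align_score R n (x(i := a)) y \<nu> - align_score R n x y \<nu> = sum f {..<length is} + sum g ({1..n} - set is)"
    by (simp add: \<nu>_eq align_score_def f_def g_def sum_subtractf)
  ultimately show ?thesis by linarith
qed

lemma opt_score_update_left: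
  "(\<And>u v. \<bar>R u v\<bar> \<le> C) \<Longrightarrow> \<bar>opt_score R n (x(i := a)) y - opt_score R n x y\<bar> \<le> 4 * C"
  unfolding opt_score_def
  by (intro abs_Max_image_diff_le finite_alignments alignments_nonempty align_score_update_left)

lemma opt_score_update_right:
  assumes R: "\<And>u v. \<bar>R u v\<bar> \<le> C"
  shows "\<bar>opt_score R n x (y(j := a)) - opt_score R n x y\<bar> \<le> 4 * C"
  unfolding opt_score_def
proof (intro abs_Max_image_diff_le finite_alignments alignments_nonempty)
  fix \<nu> assume \<nu>: "\<nu> \<in> alignments n"
  obtain "is" js where \<nu>_eq: "\<nu> = (is, js)" by fastforce
  have len: "length is = length js" and swapped: "(js, is) \<in> alignments n"
    using \<nu> by (auto simp: \<nu>_eq alignments_def)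
  have "\<bar>(\<lambda>u v. R v u) u v\<bar> \<le> C" for u v using R by simp
  from align_score_update_left[OF this swapped, where x=y and i=j and a=a and y=x]
  show "\<bar>align_score R n x (y(j := a)) \<nu> - align_score R n x y \<nu>\<bar> \<le> 4 * C"
    unfolding \<nu>_eq align_score_swap[OF len] .
qed

lemma sorted_wrt_append_shifted:
  fixes xs ys :: "nat list"
  assumes "sorted_wrt (<) xs" "sorted_wrt (<) ys" "set xs \<subseteq> {1..m}" "set ys \<subseteq> {1..n}"
  shows "sorted_wrt (<) (xs @ map (\<lambda>i. i + m) ys)"
proof -
  have "a < b + m" if "a \<in> set xs" "b \<in> set ys" for a b
  proof -
    have "a \<le> m" "1 \<le> b" using that assms(3,4) by auto
    then show ?thesis by simp
  qed
  then show ?thesis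
    using assms(1,2) by (simp add: sorted_wrt_append sorted_wrt_map)
qed

lemma gap_sum_append_shifted:
  fixes xs ys :: "nat list"
  assumes "set xs \<subseteq> {1..m}" "set ys \<subseteq> {1..n}"
  shows "(\<Sum>i\<in>{1..m+n} - set (xs @ map (\<lambda>i. i + m) ys). f i)
     = (\<Sum>i\<in>{1..m} - set xs. f i) + (\<Sum>i\<in>{1..n} - set ys. f (i + m))"
proof -
  have "{1..m+n} - set (xs @ map (\<lambda>i. i + m) ys) = ({1..m} - set xs) \<union> (\<lambda>i. i + m) ` ({1..n} - set ys)"
  proof (intro set_eqI iffI)
    fix k assume k: "k \<in> {1..m+n} - set (xs @ map (\<lambda>i. i + m) ys)"
    show "k \<in> ({1..m} - set xs) \<union> (\<lambda>i. i + m) ` ({1..n} - set ys)"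
    proof (cases "k \<le> m")
      case False
      then have "k = (k - m) + m" "k - m \<in> {1..n} - set ys" using k by force+
      then show ?thesis by blast
    qed (use k in auto)
  qed (use assms in auto)
  moreover have "({1..m} - set xs) \<inter> (\<lambda>i. i + m) ` ({1..n} - set ys) = {}" by auto
  ultimately show ?thesis by (simp add: sum.union_disjoint sum.reindex)
qed

lemma align_score_append_shifted:
  assumes \<nu>\<^sub>1: "(is\<^sub>1, js\<^sub>1) \<in> alignments m" and \<nu>\<^sub>2: "(is\<^sub>2, js\<^sub>2) \<in> alignments n"
  defines "\<nu> \<equiv> (is\<^sub>1 @ map (\<lambda>i. i + m) is\<^sub>2, js\<^sub>1 @ map (\<lambda>j. j + m) js\<^sub>2)"
  shows "\<nu> \<in> alignments (m + n)"
    and "align_score R (m + n) x y \<nu>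
           = align_score R m x y (is\<^sub>1, js\<^sub>1) + align_score R n (\<lambda>i. x (i + m)) (\<lambda>j. y (j + m)) (is\<^sub>2, js\<^sub>2)"
proof -
  have 1: "length is\<^sub>1 = length js\<^sub>1" "sorted_wrt (<) is\<^sub>1" "sorted_wrt (<) js\<^sub>1" "set is\<^sub>1 \<subseteq> {1..m}" "set js\<^sub>1 \<subseteq> {1..m}"
    using \<nu>\<^sub>1 by (auto simp: alignments_def)
  have 2: "length is\<^sub>2 = length js\<^sub>2" "sorted_wrt (<) is\<^sub>2" "sorted_wrt (<) js\<^sub>2" "set is\<^sub>2 \<subseteq> {1..n}" "set js\<^sub>2 \<subseteq> {1..n}"
    using \<nu>\<^sub>2 by (auto simp: alignments_def)
  show "\<nu> \<in> alignments (m + n)"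
    using 1 2 sorted_wrt_append_shifted[OF 1(2) 2(2) 1(4) 2(4)] sorted_wrt_append_shifted[OF 1(3) 2(3) 1(5) 2(5)]
    by (auto simp: \<nu>_def alignments_def subset_iff)
  have matched: "(\<Sum>l<length is. R (Some (x (is ! l))) (Some (y (js ! l))))
      = (\<Sum>(i, j)\<leftarrow>zip is js. R (Some (x i)) (Some (y j)))"
    if "length is = length js" for x y :: "nat \<Rightarrow> _" and "is" js
    using that by (simp add: sum_list_sum_nth atLeast0LessThan)
  have len: "length (is\<^sub>1 @ map (\<lambda>i. i + m) is\<^sub>2) = length (js\<^sub>1 @ map (\<lambda>j. j + m) js\<^sub>2)"
    using 1 2 by simp
  show "align_score R (m + n) x y \<nu>
      = align_score R m x y (is\<^sub>1, js\<^sub>1) + align_score R n (\<lambda>i. x (i + m)) (\<lambda>j. y (j + m)) (is\<^sub>2, js\<^sub>2)"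
    unfolding \<nu>_def align_score_def prod.case matched[OF len] matched[OF 1(1)] matched[OF 2(1)]
      gap_sum_append_shifted[OF 1(4) 2(4)] gap_sum_append_shifted[OF 1(5) 2(5)]
    using 1(1) matched[OF 2(1), where x="\<lambda>i. x (i + m)" and y="\<lambda>j. y (j + m)"]
    by (simp add: zip_map_map comp_def split_def)
qed

lemma opt_score_superadditive:
  "opt_score R m x y + opt_score R n (\<lambda>i. x (i + m)) (\<lambda>j. y (j + m)) \<le> opt_score R (m + n) x y"
proof -
  obtain is\<^sub>1 js\<^sub>1 where \<nu>\<^sub>1: "(is\<^sub>1, js\<^sub>1) \<in> alignments m" "opt_score R m x y = align_score R m x y (is\<^sub>1, js\<^sub>1)"
    by (metis opt_score_attained surj_pair)
  obtain is\<^sub>2 js\<^sub>2 where \<nu>\<^sub>2: "(is\<^sub>2, js\<^sub>2) \<in> alignments n"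
    "opt_score R n (\<lambda>i. x (i + m)) (\<lambda>j. y (j + m)) = align_score R n (\<lambda>i. x (i + m)) (\<lambda>j. y (j + m)) (is\<^sub>2, js\<^sub>2)"
    by (metis opt_score_attained surj_pair)
  note \<nu> = align_score_append_shifted[OF \<nu>\<^sub>1(1) \<nu>\<^sub>2(1)]
  show ?thesis
    using align_score_le_opt_score[OF \<nu>(1), of R x y] \<nu>(2)[of R x y] \<nu>\<^sub>1(2) \<nu>\<^sub>2(2) by linarith
qed

section \<open>Support functions and Hausdorff limits\<close>

definition support_function :: "'a::real_inner set \<Rightarrow> 'a \<Rightarrow> real" where
  "support_function A v = (SUP z\<in>A. v \<bullet> z)"

lemma inner_le_support_function: "bounded A \<Longrightarrow> z \<in> A \<Longrightarrow> v \<bullet> z \<le> support_function A v"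
  unfolding support_function_def
  by (intro cSUP_upper bounded_imp_bdd_above bounded_linear_image bounded_linear_inner_right)

lemma support_function_eqI:
  assumes "\<And>z. z \<in> A \<Longrightarrow> v \<bullet> z \<le> c" "z\<^sub>0 \<in> A" "v \<bullet> z\<^sub>0 = c"
  shows "support_function A v = c"
proof -
  have "bdd_above ((\<lambda>z. v \<bullet> z) ` A)"
    using assms(1) by (intro bdd_aboveI) auto
  then show ?thesis
    unfolding support_function_def using assms
    by (intro antisym cSUP_least) (auto intro: cSUP_upper2[where x=z\<^sub>0])
qed

lemma support_function_attained:
  assumes "compact A" "A \<noteq> {}"
  obtains z where "z \<in> A" "v \<bullet> z = support_function A v"
proof -
  obtain z where "z \<in> A" "\<And>w. w \<in> A \<Longrightarrow> v \<bullet> w \<le> v \<bullet> z"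
    using continuous_attains_sup[OF assms continuous_on_inner[OF continuous_on_const continuous_on_id]]
    by blast
  then show ?thesis
    using that support_function_eqI by metis
qed

lemma support_function_lipschitz:
  assumes "compact A" "A \<noteq> {}" "A \<subseteq> cball 0 B"
  shows "\<bar>support_function A v - support_function A v'\<bar> \<le> B * dist v v'"
proof -
  have "support_function A v \<le> support_function A v' + B * dist v v'" for v v'
  proof -
    obtain z where z: "z \<in> A" "v \<bullet> z = support_function A v"
      using support_function_attained[OF assms(1,2)] by blast
    have "(v - v') \<bullet> z \<le> norm (v - v') * norm z"
      by (rule order_trans[OF abs_ge_self Cauchy_Schwarz_ineq2])
    also have "\<dots> \<le> norm (v - v') * B"
      using z(1) assms(3) by (intro mult_left_mono) auto
    finally have "v \<bullet> z \<le> v' \<bullet> z + B * dist v v'"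
      by (simp add: inner_diff_left dist_norm mult.commute)
    also have "v' \<bullet> z \<le> support_function A v'"
      using z(1) assms(1) by (intro inner_le_support_function compact_imp_bounded)
    finally show ?thesis using z(2) by simp
  qed
  from this[of v v'] this[of v' v] show ?thesis
    by (simp add: abs_le_iff dist_commute)
qed

text \<open>The unit vector pointing from the nearest point of \<open>B\<close> to \<open>y\<close> separates \<open>y\<close> from \<open>B\<close> by
  \<open>infdist y B\<close>.\<close>

lemma infdist_less_if_not_separated:
  fixes B :: "'a::euclidean_space set"
  assumes "closed B" "convex B" "B \<noteq> {}" "e > 0"
    and not_separated: "\<And>v. norm v = 1 \<Longrightarrow> \<exists>w\<in>B. v \<bullet> y < v \<bullet> w + e"
  shows "infdist y B < e"
proof (rule ccontr)
  assume "\<not> infdist y B < e"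
  obtain z where z: "z \<in> B" "infdist y B = dist y z"
    using infdist_attains_inf[OF assms(1,3)] by blast
  define d where "d = dist y z"
  have "d \<ge> e" using \<open>\<not> infdist y B < e\<close> z(2) by (simp add: d_def)
  define v where "v = (1 / d) *\<^sub>R (y - z)"
  have "d > 0" using \<open>d \<ge> e\<close> \<open>e > 0\<close> by simp
  have "(y - z) \<bullet> (y - z) = d\<^sup>2"
    by (simp add: d_def dist_norm power2_norm_eq_inner)
  then have "v \<bullet> (y - z) = d"
    using \<open>d > 0\<close> by (simp add: v_def power2_eq_square)
  then have "v \<bullet> y = v \<bullet> z + d"
    by (simp add: inner_diff_right)
  have "norm v = 1"
    using \<open>d > 0\<close> by (simp add: v_def d_def dist_norm)
  have "v \<bullet> w \<le> v \<bullet> z" if "w \<in> B" for w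
  proof -
    have "(y - z) \<bullet> (w - z) \<le> 0"
      using any_closest_point_dot[OF assms(2,1) z(1) that] z(2) infdist_le[of _ B y] by auto
    then show ?thesis
      using \<open>d > 0\<close> by (simp add: v_def inner_diff_right divide_right_mono)
  qed
  with not_separated[OF \<open>norm v = 1\<close>] \<open>v \<bullet> y = v \<bullet> z + d\<close> \<open>d \<ge> e\<close> show False
    by fastforce
qed

lemma hausdist_le:
  assumes "A \<noteq> {}" "B \<noteq> {}" "\<And>x. x \<in> A \<Longrightarrow> infdist x B \<le> r" "\<And>y. y \<in> B \<Longrightarrow> infdist y A \<le> r"
  shows "0 \<le> hausdist A B" "hausdist A B \<le> r"
proof -
  obtain x where "x \<in> A" using assms(1) by blast
  have "infdist x B \<le> (SUP x\<in>A. infdist x B)"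
    using assms(3) \<open>x \<in> A\<close> by (intro cSUP_upper bdd_aboveI) auto
  then show "0 \<le> hausdist A B"
    unfolding hausdist_def using infdist_nonneg[of x B] by linarith
  show "hausdist A B \<le> r"
    unfolding hausdist_def using assms by (auto intro!: cSUP_least)
qed

definition halfspaces_Inter :: "('a::real_inner \<Rightarrow> real) \<Rightarrow> 'a set" where
  "halfspaces_Inter g = {z. \<forall>v\<in>sphere 0 1. v \<bullet> z \<le> g v}"

lemma halfspaces_Inter_eq: "halfspaces_Inter g = (\<Inter>v\<in>sphere 0 1. {z. v \<bullet> z \<le> g v})"
  by (auto simp: halfspaces_Inter_def)

lemma closed_halfspaces_Inter: "closed (halfspaces_Inter g)"
  unfolding halfspaces_Inter_eq by (auto intro!: closed_INT closed_halfspace_le)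

lemma convex_halfspaces_Inter: "convex (halfspaces_Inter g)"
  unfolding halfspaces_Inter_eq by (auto intro!: convex_INT convex_halfspace_le)

context
  fixes A :: "nat \<Rightarrow> 'a::euclidean_space set" and g :: "'a \<Rightarrow> real"
  assumes compact: "\<And>n. compact (A n)" and convex: "\<And>n. convex (A n)"
    and nonempty: "\<And>n. A n \<noteq> {}" and bounded: "bounded (\<Union>n. A n)"
    and support_uniform:
      "\<And>e. e > 0 \<Longrightarrow> \<forall>\<^sub>F n in sequentially. \<forall>v\<in>sphere 0 1. \<bar>support_function (A n) v - g v\<bar> < e"
begin

lemma support_function_tendsto:
  assumes "v \<in> sphere 0 1"
  shows "(\<lambda>n. support_function (A n) v) \<longlonglongrightarrow> g v"
proof (rule tendstoI)
  fix e :: real assume "e > 0"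
  from support_uniform[OF this] show "\<forall>\<^sub>F n in sequentially. dist (support_function (A n) v) (g v) < e"
    by eventually_elim (use assms in \<open>simp add: dist_real_def\<close>)
qed

lemma halfspaces_Inter_attains:
  assumes v: "v \<in> sphere 0 1"
  obtains l where "l \<in> halfspaces_Inter g" "v \<bullet> l = g v"
proof -
  have "\<forall>n. \<exists>z. z \<in> A n \<and> v \<bullet> z = support_function (A n) v"
    using support_function_attained[OF compact nonempty] by blast
  then obtain z where z: "\<And>n. z n \<in> A n" "\<And>n. v \<bullet> z n = support_function (A n) v"
    by (metis choice)
  have "bounded (range z)"
    using z(1) by (blast intro: bounded_subset[OF bounded])
  then obtain l s where s: "strict_mono s" "(z \<circ> s) \<longlonglongrightarrow> l"
    using bounded_imp_convergent_subsequence by blast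
  have along_s: "(\<lambda>k. support_function (A (s k)) u) \<longlonglongrightarrow> g u" if "u \<in> sphere 0 1" for u
    using LIMSEQ_subseq_LIMSEQ[OF support_function_tendsto[OF that] s(1)] by (simp add: comp_def)
  have "u \<bullet> l \<le> g u" if "u \<in> sphere 0 1" for u
  proof (rule LIMSEQ_le[OF _ along_s[OF that]])
    show "(\<lambda>k. u \<bullet> z (s k)) \<longlonglongrightarrow> u \<bullet> l"
      using s(2) by (intro tendsto_intros) (simp add: comp_def)
    show "\<exists>N. \<forall>k\<ge>N. u \<bullet> z (s k) \<le> support_function (A (s k)) u"
      using z(1) by (blast intro: inner_le_support_function compact_imp_bounded compact)
  qed
  moreover have "(\<lambda>k. v \<bullet> z (s k)) \<longlonglongrightarrow> v \<bullet> l"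
    using s(2) by (intro tendsto_intros) (simp add: comp_def)
  then have "(\<lambda>k. support_function (A (s k)) v) \<longlonglongrightarrow> v \<bullet> l"
    by (simp add: z(2))
  then have "v \<bullet> l = g v"
    using along_s[OF v] by (rule LIMSEQ_unique)
  ultimately show ?thesis
    by (intro that[of l]) (auto simp: halfspaces_Inter_def)
qed

lemma halfspaces_Inter_nonempty: "halfspaces_Inter g \<noteq> {}"
proof -
  obtain b :: 'a where "b \<in> Basis" using nonempty_Basis by blast
  then have "b \<in> sphere 0 1" by simp
  then show ?thesis using halfspaces_Inter_attains by blast
qed

lemma bounded_halfspaces_Inter: "bounded (halfspaces_Inter g)"
proof -
  obtain B where B: "\<And>n z. z \<in> A n \<Longrightarrow> norm z \<le> B"
    using bounded unfolding bounded_iff by blast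
  have "0 \<le> B"
    using B nonempty[of 0] by (meson all_not_in_conv norm_ge_zero order_trans)
  have "norm z \<le> B + 1" if z: "z \<in> halfspaces_Inter g" for z
  proof (cases "z = 0")
    case False
    define v where "v = (1 / norm z) *\<^sub>R z"
    have v: "v \<in> sphere 0 1" "v \<bullet> z = norm z"
      using False by (auto simp: v_def power2_norm_eq_inner[symmetric] power2_eq_square)
    obtain n where "\<forall>m\<ge>n. \<forall>v\<in>sphere 0 1. \<bar>support_function (A m) v - g v\<bar> < 1"
      using support_uniform[of 1] by (auto simp: eventually_sequentially)
    then have n: "\<bar>support_function (A n) v - g v\<bar> < 1"
      using v(1) by blast
    obtain w where w: "w \<in> A n" "v \<bullet> w = support_function (A n) v"
      using support_function_attained[OF compact nonempty] by blast
    have "v \<bullet> w \<le> B"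
      using Cauchy_Schwarz_ineq2[of v w] B[OF w(1)] v(1) by simp
    moreover have "v \<bullet> z \<le> g v"
      using z v(1) by (simp add: halfspaces_Inter_def)
    ultimately show ?thesis
      using v(2) n w(2) by (simp add: abs_less_iff)
  qed (use \<open>0 \<le> B\<close> in simp)
  then show ?thesis unfolding bounded_iff by blast
qed

lemma compact_halfspaces_Inter: "compact (halfspaces_Inter g)"
  using bounded_halfspaces_Inter closed_halfspaces_Inter by (simp add: compact_eq_bounded_closed)

lemma infdist_halfspaces_Inter_less:
  assumes close: "\<forall>v\<in>sphere 0 1. \<bar>support_function (A n) v - g v\<bar> < e" and "x \<in> A n" "e > 0"
  shows "infdist x (halfspaces_Inter g) < e"
proof (rule infdist_less_if_not_separated[OF closed_halfspaces_Inter convex_halfspaces_Inter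
      halfspaces_Inter_nonempty \<open>e > 0\<close>])
  fix v :: 'a assume "norm v = 1"
  then obtain l where l: "l \<in> halfspaces_Inter g" "v \<bullet> l = g v"
    using halfspaces_Inter_attains by (metis mem_sphere_0)
  have "v \<bullet> x \<le> support_function (A n) v"
    using \<open>x \<in> A n\<close> by (intro inner_le_support_function compact_imp_bounded compact)
  moreover have "\<bar>support_function (A n) v - g v\<bar> < e"
    using close \<open>norm v = 1\<close> by simp
  ultimately have "v \<bullet> x < v \<bullet> l + e"
    unfolding l(2) abs_less_iff by linarith
  then show "\<exists>l\<in>halfspaces_Inter g. v \<bullet> x < v \<bullet> l + e"
    using l(1) by blast
qed

lemma infdist_less_if_in_halfspaces_Inter:
  assumes close: "\<forall>v\<in>sphere 0 1. \<bar>support_function (A n) v - g v\<bar> < e"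
    and "y \<in> halfspaces_Inter g" "e > 0"
  shows "infdist y (A n) < e"
proof (rule infdist_less_if_not_separated[OF compact_imp_closed[OF compact] convex nonempty \<open>e > 0\<close>])
  fix v :: 'a assume "norm v = 1"
  obtain w where w: "w \<in> A n" "v \<bullet> w = support_function (A n) v"
    using support_function_attained[OF compact nonempty] by blast
  have "v \<bullet> y \<le> g v"
    using \<open>y \<in> halfspaces_Inter g\<close> \<open>norm v = 1\<close> by (simp add: halfspaces_Inter_def)
  moreover have "\<bar>support_function (A n) v - g v\<bar> < e"
    using close \<open>norm v = 1\<close> by simp
  ultimately have "v \<bullet> y < v \<bullet> w + e"
    unfolding w(2) abs_less_iff by linarith
  then show "\<exists>w\<in>A n. v \<bullet> y < v \<bullet> w + e"
    using w(1) by blast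
qed

lemma hausdist_tendsto_halfspaces_Inter: "(\<lambda>n. hausdist (A n) (halfspaces_Inter g)) \<longlonglongrightarrow> 0"
proof (rule tendstoI)
  fix r :: real assume "r > 0"
  then have "r / 2 > 0" by simp
  show "\<forall>\<^sub>F n in sequentially. dist (hausdist (A n) (halfspaces_Inter g)) 0 < r"
    using support_uniform[OF \<open>r / 2 > 0\<close>]
  proof eventually_elim
    case (elim n)
    then have "0 \<le> hausdist (A n) (halfspaces_Inter g)" "hausdist (A n) (halfspaces_Inter g) \<le> r / 2"
      using hausdist_le[OF nonempty halfspaces_Inter_nonempty, of n "r / 2"] \<open>r / 2 > 0\<close>
        infdist_halfspaces_Inter_less infdist_less_if_in_halfspaces_Inter less_imp_le by blast+
    then show ?case using \<open>r > 0\<close> by simp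
  qed
qed

end

lemma eventually_uniformly_close_if_equi_Lipschitz:
  fixes f :: "nat \<Rightarrow> 'a::metric_space \<Rightarrow> real" and g :: "'a \<Rightarrow> real"
  assumes "compact C"
    and dense: "\<And>x r. r > 0 \<Longrightarrow> \<exists>d\<in>D. dist d x < r"
    and lipschitz_f: "\<And>n x y. \<bar>f n x - f n y\<bar> \<le> L * dist x y"
    and lipschitz_g: "\<And>x y. \<bar>g x - g y\<bar> \<le> L * dist x y"
    and tendsto_on_D: "\<And>d. d \<in> D \<Longrightarrow> (\<lambda>n. f n d) \<longlonglongrightarrow> g d"
    and "e > 0"
  shows "\<forall>\<^sub>F n in sequentially. \<forall>x\<in>C. \<bar>f n x - g x\<bar> < e"
proof -
  define \<delta> where "\<delta> = e / (3 * (\<bar>L\<bar> + 1))"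
  have "\<delta> > 0" using \<open>e > 0\<close> by (simp add: \<delta>_def)
  have "\<bar>L\<bar> * \<delta> < e / 3"
    using \<open>e > 0\<close> by (simp add: \<delta>_def field_simps)
  have "C \<subseteq> (\<Union>d\<in>D. ball d \<delta>)"
    using dense[OF \<open>\<delta> > 0\<close>] by auto
  then obtain D' where D': "D' \<subseteq> D" "finite D'" "C \<subseteq> (\<Union>d\<in>D'. ball d \<delta>)"
    using compactE_image[OF \<open>compact C\<close>, of D "\<lambda>d. ball d \<delta>"] by blast
  have "\<forall>\<^sub>F n in sequentially. \<bar>f n d - g d\<bar> < e / 3" if "d \<in> D'" for d
  proof -
    have "e / 3 > 0" using \<open>e > 0\<close> by simp
    from tendstoD[OF tendsto_on_D this] that D'(1) show ?thesis
      by (auto simp: dist_real_def)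
  qed
  then have "\<forall>\<^sub>F n in sequentially. \<forall>d\<in>D'. \<bar>f n d - g d\<bar> < e / 3"
    using D'(2) by (intro eventually_ball_finite) auto
  then show ?thesis
  proof eventually_elim
    case (elim n)
    show ?case
    proof
      fix x assume "x \<in> C"
      then obtain d where "d \<in> D'" "dist d x < \<delta>" using D'(3) by auto
      then have "L * dist x d \<le> \<bar>L\<bar> * \<delta>" "L * dist d x \<le> \<bar>L\<bar> * \<delta>"
        by (auto simp: dist_commute intro!: order_trans[OF abs_ge_self[of "L * _"]] mult_left_mono
            simp add: abs_mult)
      moreover have "\<bar>f n d - g d\<bar> < e / 3"
        using elim \<open>d \<in> D'\<close> by blast
      ultimately show "\<bar>f n x - g x\<bar> < e"
        using lipschitz_f[of n x d] lipschitz_g[of d x] \<open>\<bar>L\<bar> * \<delta> < e / 3\<close>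
        unfolding abs_le_iff abs_less_iff by linarith
    qed
  qed
qed

section \<open>Score sets\<close>

lemma inner_Pair_eq: "(a, b) \<bullet> z = a * fst z + b * snd z" for a b :: real
  by (cases z) (simp add: inner_Pair)

definition score_points ::
  "('a option \<Rightarrow> 'a option \<Rightarrow> real) \<Rightarrow> ('a option \<Rightarrow> 'a option \<Rightarrow> real)
     \<Rightarrow> nat \<Rightarrow> (nat \<Rightarrow> 'a) \<Rightarrow> (nat \<Rightarrow> 'a) \<Rightarrow> (real \<times> real) set" where
  "score_points S T n x y =
     (\<lambda>\<nu>. (align_score S n x y \<nu> / real n, align_score T n x y \<nu> / real n)) ` alignments n"

lemma finite_score_points: "finite (score_points S T n x y)"
  by (simp add: score_points_def finite_alignments)

lemma score_points_nonempty: "score_points S T n x y \<noteq> {}"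
  by (simp add: score_points_def alignments_nonempty)

lemma score_set_eq_convex_hull: "score_set S T n x y = convex hull (score_points S T n x y)"
  unfolding score_set_def score_points_def[symmetric]
  by (intro closure_closed compact_imp_closed finite_imp_compact_convex_hull finite_score_points)

lemma compact_score_set: "compact (score_set S T n x y)"
  unfolding score_set_eq_convex_hull by (intro finite_imp_compact_convex_hull finite_score_points)

lemma convex_score_set: "convex (score_set S T n x y)"
  unfolding score_set_eq_convex_hull by simp

lemma score_set_nonempty: "score_set S T n x y \<noteq> {}"
  unfolding score_set_eq_convex_hull using score_points_nonempty by simp

lemma score_set_subset_cball:
  assumes S: "\<And>u v. \<bar>S u v\<bar> \<le> C\<^sub>S" and T: "\<And>u v. \<bar>T u v\<bar> \<le> C\<^sub>T"
  shows "score_set S T n x y \<subseteq> cball 0 (3 * (C\<^sub>S + C\<^sub>T))"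
  unfolding score_set_eq_convex_hull
proof (intro hull_minimal subsetI convex_cball)
  fix z assume "z \<in> score_points S T n x y"
  then obtain \<nu> where \<nu>: "\<nu> \<in> alignments n"
    and z: "z = (align_score S n x y \<nu> / real n, align_score T n x y \<nu> / real n)"
    by (auto simp: score_points_def)
  have normalized: "\<bar>align_score R n x y \<nu> / real n\<bar> \<le> 3 * C" if "\<And>u v. \<bar>R u v\<bar> \<le> C" for R C
  proof (cases "n = 0")
    case False
    then show ?thesis
      using align_score_abs_le[OF that \<nu>] by (simp add: abs_divide divide_le_eq mult_ac)
  qed (use that[of None None] in simp)
  have "norm z \<le> \<bar>fst z\<bar> + \<bar>snd z\<bar>"
    using norm_Pair_le[of "fst z" "snd z"] by simp
  then show "z \<in> cball 0 (3 * (C\<^sub>S + C\<^sub>T))"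
    using normalized[of S C\<^sub>S] normalized[of T C\<^sub>T] S T by (simp add: z)
qed

lemma support_function_score_set:
  "support_function (score_set S T n x y) (a, b) = opt_score (\<lambda>u v. a * S u v + b * T u v) n x y / real n"
proof -
  let ?R = "\<lambda>u v. a * S u v + b * T u v"
  let ?H = "{z. (a, b) \<bullet> z \<le> opt_score ?R n x y / real n}"
  let ?p = "\<lambda>\<nu>. (align_score S n x y \<nu> / real n, align_score T n x y \<nu> / real n)"
  have point: "(a, b) \<bullet> ?p \<nu> = align_score ?R n x y \<nu> / real n" for \<nu>
    by (simp add: align_score_linear add_divide_distrib)
  have "score_points S T n x y \<subseteq> ?H"
  proof
    fix z assume "z \<in> score_points S T n x y"
    then obtain \<nu> where \<nu>: "\<nu> \<in> alignments n" and z: "z = ?p \<nu>"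
      by (auto simp: score_points_def)
    have "align_score ?R n x y \<nu> / real n \<le> opt_score ?R n x y / real n"
      using \<nu> by (intro divide_right_mono align_score_le_opt_score) auto
    then show "z \<in> ?H"
      unfolding z mem_Collect_eq point .
  qed
  then have le: "score_set S T n x y \<subseteq> ?H"
    unfolding score_set_eq_convex_hull by (intro hull_minimal convex_halfspace_le)
  obtain \<nu> where \<nu>: "\<nu> \<in> alignments n" "opt_score ?R n x y = align_score ?R n x y \<nu>"
    by (rule opt_score_attained)
  show ?thesis
  proof (rule support_function_eqI[where z\<^sub>0="?p \<nu>"])
    show "(a, b) \<bullet> z \<le> opt_score ?R n x y / real n" if "z \<in> score_set S T n x y" for z
      using that le by blast
    show "?p \<nu> \<in> score_set S T n x y"
      unfolding score_set_eq_convex_hull using \<nu>(1) by (intro hull_inc) (auto simp: score_points_def)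
    show "(a, b) \<bullet> ?p \<nu> = opt_score ?R n x y / real n"
      by (simp only: point \<nu>(2))
  qed
qed

section \<open>Superadditive sequences\<close>

lemma superadditive_mult_add:
  fixes a :: "nat \<Rightarrow> real"
  assumes "\<And>m n. a m + a n \<le> a (m + n)"
  shows "real q * a m + a r \<le> a (q * m + r)"
proof (induction q)
  case (Suc q)
  have "real (Suc q) * a m + a r = a m + (real q * a m + a r)" by (simp add: algebra_simps)
  also have "\<dots> \<le> a m + a (q * m + r)" using Suc by simp
  also have "\<dots> \<le> a (Suc q * m + r)" using assms[of m "q * m + r"] by (simp add: add.assoc)
  finally show ?case .
qed simp

lemma superadditive_divide_lower_bound:
  fixes a :: "nat \<Rightarrow> real"
  assumes superadditive: "\<And>m n. a m + a n \<le> a (m + n)" and bounded: "\<And>n. \<bar>a n\<bar> \<le> B * real n"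
    and "1 \<le> m" "m \<le> n"
  shows "a m / real m - (real m * \<bar>a m / real m\<bar> + B * real m) / real n \<le> a n / real n"
proof -
  define t where "t = a m / real m"
  define q r where "q = n div m" and "r = n mod m"
  have "n = q * m + r" "r < m"
    using \<open>1 \<le> m\<close> by (simp_all add: q_def r_def)
  have "0 \<le> B" using bounded[of 1] by simp
  have "real q * a m = (real n - real r) * t"
    using \<open>1 \<le> m\<close> \<open>n = q * m + r\<close> by (simp add: t_def field_simps)
  moreover have "real r * t \<le> real m * \<bar>t\<bar>"
    using \<open>r < m\<close> by (intro order_trans[OF _ mult_right_mono[of "real r" "real m"]])
      (auto intro: mult_left_mono)
  moreover have "B * real r \<le> B * real m"
    using \<open>r < m\<close> \<open>0 \<le> B\<close> by (intro mult_left_mono) auto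
  moreover have "real q * a m + a r \<le> a n" "- B * real r \<le> a r"
    using superadditive_mult_add[OF superadditive, of q m r] \<open>n = q * m + r\<close> bounded[of r]
    by (simp_all add: abs_le_iff)
  ultimately have "real n * t - (real m * \<bar>t\<bar> + B * real m) \<le> a n"
    by (simp add: algebra_simps)
  then have "(real n * t - (real m * \<bar>t\<bar> + B * real m)) / real n \<le> a n / real n"
    by (intro divide_right_mono) auto
  moreover have "real n > 0" using assms(3,4) by simp
  then have "t - (real m * \<bar>t\<bar> + B * real m) / real n = (real n * t - (real m * \<bar>t\<bar> + B * real m)) / real n"
    by (simp add: field_simps)
  ultimately show ?thesis
    unfolding t_def[symmetric] by simp
qed

lemma Fekete_superadditive:
  fixes a :: "nat \<Rightarrow> real"
  assumes superadditive: "\<And>m n. a m + a n \<le> a (m + n)" and bounded: "\<And>n. \<bar>a n\<bar> \<le> B * real n"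
  shows "(\<lambda>n. a n / real n) \<longlonglongrightarrow> (SUP n\<in>{1..}. a n / real n)"
proof -
  have "bdd_above ((\<lambda>n. a n / real n) ` {1..})"
    using bounded by (intro bdd_aboveI[of _ B]) (auto simp: divide_le_eq abs_le_iff)
  then have le_Sup: "a n / real n \<le> (SUP n\<in>{1..}. a n / real n)" if "n \<ge> 1" for n
    using that by (intro cSUP_upper) auto
  show ?thesis
  proof (rule order_tendstoI)
    fix b assume "b < (SUP n\<in>{1..}. a n / real n)"
    then obtain m where "m \<ge> 1" and "b < a m / real m"
      using \<open>bdd_above _\<close> by (subst (asm) less_cSUP_iff) auto
    define K where "K = real m * \<bar>a m / real m\<bar> + B * real m"
    have "(\<lambda>n. a m / real m - K / real n) \<longlonglongrightarrow> a m / real m"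
      using tendsto_diff[OF tendsto_const lim_const_over_n[of K]] by simp
    then have "\<forall>\<^sub>F n in sequentially. b < a m / real m - K / real n"
      using \<open>b < a m / real m\<close> by (rule order_tendstoD(1))
    then show "\<forall>\<^sub>F n in sequentially. b < a n / real n"
      using eventually_ge_at_top[of m]
      by eventually_elim
        (use superadditive_divide_lower_bound[OF superadditive bounded \<open>m \<ge> 1\<close>] in \<open>force simp: K_def\<close>)
  next
    fix b assume "(SUP n\<in>{1..}. a n / real n) < b"
    show "\<forall>\<^sub>F n in sequentially. a n / real n < b"
      using eventually_ge_at_top[of 1] by eventually_elim (use le_Sup \<open>_ < b\<close> in force)
  qed
qed

lemma filterlim_floor_sqrt_at_top: "filterlim floor_sqrt at_top sequentially"
  unfolding filterlim_at_top
  by (intro allI eventually_sequentiallyI[of "_\<^sup>2"]) (simp add: le_floor_sqrt_iff)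

lemma le_floor_sqrt_square_add: "n \<le> (floor_sqrt n)\<^sup>2 + (2 * floor_sqrt n + 1)"
  using Suc_floor_sqrt_power2_gt[of n] by (simp add: power2_eq_square)

lemma floor_sqrt_gap_tendsto_0: "(\<lambda>n. real (2 * floor_sqrt n + 1) / real n) \<longlonglongrightarrow> 0"
proof (rule tendsto_sandwich[OF _ _ tendsto_const])
  show "(\<lambda>n. 3 / real (floor_sqrt n)) \<longlonglongrightarrow> 0"
    by (rule filterlim_compose[OF lim_const_over_n filterlim_floor_sqrt_at_top])
  have "real (2 * floor_sqrt n + 1) / real n \<le> 3 / real (floor_sqrt n)" if "n \<ge> 1" for n
  proof -
    let ?k = "floor_sqrt n"
    have "?k \<ge> 1" using that by (simp add: Suc_le_eq)
    have "?k \<le> ?k * ?k"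
      by (rule le_square)
    moreover have "?k * ?k \<le> n"
      using floor_sqrt_power2_le[of n] by (simp add: power2_eq_square)
    moreover have "(2 * ?k + 1) * ?k = 2 * (?k * ?k) + ?k"
      by (simp add: algebra_simps)
    ultimately have "(2 * ?k + 1) * ?k \<le> 3 * n"
      by linarith
    then have "real (2 * ?k + 1) * real ?k \<le> 3 * real n"
      by (metis of_nat_le_iff of_nat_mult of_nat_numeral)
    then show ?thesis
      using \<open>?k \<ge> 1\<close> that by (simp add: field_simps)
  qed
  then show "\<forall>\<^sub>F n in sequentially. real (2 * floor_sqrt n + 1) / real n \<le> 3 / real (floor_sqrt n)"
    by (intro eventually_sequentiallyI[of 1])
qed simp

lemma floor_sqrt_square_ratio_tendsto_1: "(\<lambda>n. real ((floor_sqrt n)\<^sup>2) / real n) \<longlonglongrightarrow> 1"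
proof (rule tendsto_sandwich[of "\<lambda>n. 1 - real (2 * floor_sqrt n + 1) / real n" _ _ "\<lambda>_. 1"])
  have "1 - real (2 * floor_sqrt n + 1) / real n \<le> real ((floor_sqrt n)\<^sup>2) / real n" if "n \<ge> 1" for n
  proof -
    have "real n \<le> real ((floor_sqrt n)\<^sup>2) + real (2 * floor_sqrt n + 1)"
      using le_floor_sqrt_square_add[of n] by (metis of_nat_add of_nat_le_iff)
    have "1 - real (2 * floor_sqrt n + 1) / real n = (real n - real (2 * floor_sqrt n + 1)) / real n"
      using that by (simp add: diff_divide_distrib)
    also have "\<dots> \<le> real ((floor_sqrt n)\<^sup>2) / real n"
      using \<open>real n \<le> _\<close> by (intro divide_right_mono) auto
    finally show ?thesis .
  qed
  then show "\<forall>\<^sub>F n in sequentially. 1 - real (2 * floor_sqrt n + 1) / real n \<le> real ((floor_sqrt n)\<^sup>2) / real n"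
    by (intro eventually_sequentiallyI[of 1])
  show "\<forall>\<^sub>F n in sequentially. real ((floor_sqrt n)\<^sup>2) / real n \<le> 1"
    by (intro eventually_sequentiallyI[of 1]) (simp add: divide_le_eq_1)
qed (use tendsto_diff[OF tendsto_const floor_sqrt_gap_tendsto_0, of 1] in auto)

lemma Suc_floor_sqrt_square_ratio_tendsto_1: "(\<lambda>n. real ((floor_sqrt n + 1)\<^sup>2) / real n) \<longlonglongrightarrow> 1"
proof (rule tendsto_sandwich[of "\<lambda>_. 1" _ _ "\<lambda>n. 1 + real (2 * floor_sqrt n + 1) / real n"])
  have "real ((floor_sqrt n + 1)\<^sup>2) / real n \<le> 1 + real (2 * floor_sqrt n + 1) / real n" if "n \<ge> 1" for n
  proof -
    have "(floor_sqrt n + 1)\<^sup>2 \<le> n + (2 * floor_sqrt n + 1)"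
      using floor_sqrt_power2_le[of n] by (simp add: power2_eq_square)
    then have "real ((floor_sqrt n + 1)\<^sup>2) \<le> real n + real (2 * floor_sqrt n + 1)"
      by (metis of_nat_add of_nat_le_iff)
    then have "real ((floor_sqrt n + 1)\<^sup>2) / real n \<le> (real n + real (2 * floor_sqrt n + 1)) / real n"
      by (intro divide_right_mono) auto
    also have "\<dots> = 1 + real (2 * floor_sqrt n + 1) / real n"
      using that by (simp add: add_divide_distrib)
    finally show ?thesis .
  qed
  then show "\<forall>\<^sub>F n in sequentially. real ((floor_sqrt n + 1)\<^sup>2) / real n \<le> 1 + real (2 * floor_sqrt n + 1) / real n"
    by (intro eventually_sequentiallyI[of 1])
  show "\<forall>\<^sub>F n in sequentially. 1 \<le> real ((floor_sqrt n + 1)\<^sup>2) / real n"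
    using Suc_floor_sqrt_power2_gt
    by (intro eventually_sequentiallyI[of 1]) (simp add: le_divide_eq_1 less_imp_le flip: of_nat_power)
qed (use tendsto_add[OF tendsto_const floor_sqrt_gap_tendsto_0, of 1] in auto)

lemma almost_superadditive_between_squares:
  fixes F :: "nat \<Rightarrow> real"
  assumes almost_superadditive: "\<And>m d. F m - c * real d \<le> F (m + d)" and "0 \<le> c"
    and "k\<^sup>2 \<le> n" "n \<le> k\<^sup>2 + (2 * k + 1)"
  shows "F (k\<^sup>2) - c * real (2 * k + 1) \<le> F n" and "F n \<le> F ((k + 1)\<^sup>2) + c * real (2 * k + 1)"
proof -
  have "(k + 1)\<^sup>2 = k\<^sup>2 + (2 * k + 1)"
    by (simp add: power2_eq_square)
  then have "n - k\<^sup>2 \<le> 2 * k + 1" "(k + 1)\<^sup>2 - n \<le> 2 * k + 1"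
    using assms(3,4) by linarith+
  then have "c * real (n - k\<^sup>2) \<le> c * real (2 * k + 1)" "c * real ((k + 1)\<^sup>2 - n) \<le> c * real (2 * k + 1)"
    using \<open>0 \<le> c\<close> by (intro mult_left_mono; simp only: of_nat_le_iff)+
  moreover have "F (k\<^sup>2) - c * real (n - k\<^sup>2) \<le> F n" "F n - c * real ((k + 1)\<^sup>2 - n) \<le> F ((k + 1)\<^sup>2)"
    using almost_superadditive[of "k\<^sup>2" "n - k\<^sup>2"] almost_superadditive[of n "(k + 1)\<^sup>2 - n"] assms(3,4)
    by (simp_all add: power2_eq_square)
  ultimately show "F (k\<^sup>2) - c * real (2 * k + 1) \<le> F n" "F n \<le> F ((k + 1)\<^sup>2) + c * real (2 * k + 1)"
    by linarith+
qed

text \<open>Interpolation between consecutive squares \<open>k\<^sup>2 \<le> n < (k + 1)\<^sup>2\<close> costs \<open>O(k)\<close>, which is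
  negligible against \<open>n\<close>.\<close>

lemma tendsto_divide_of_tendsto_squares:
  fixes F :: "nat \<Rightarrow> real"
  assumes squares: "(\<lambda>k. F (k\<^sup>2) / real (k\<^sup>2)) \<longlonglongrightarrow> L"
    and almost_superadditive: "\<And>m d. F m - c * real d \<le> F (m + d)"
  shows "(\<lambda>n. F n / real n) \<longlonglongrightarrow> L"
proof -
  let ?k = floor_sqrt
  define \<delta> where "\<delta> n = real (2 * ?k n + 1) / real n" for n
  have "F m - \<bar>c\<bar> * real d \<le> F (m + d)" for m d
    using almost_superadditive[of m d] mult_right_mono[OF abs_ge_self[of c], of "real d"] by linarith
  note between = almost_superadditive_between_squares[of F "\<bar>c\<bar>", OF this abs_ge_zero
      floor_sqrt_power2_le le_floor_sqrt_square_add]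
  have lower: "F ((?k n)\<^sup>2) / real ((?k n)\<^sup>2) * (real ((?k n)\<^sup>2) / real n) - \<bar>c\<bar> * \<delta> n \<le> F n / real n"
    if "n \<ge> 1" for n
  proof -
    have "?k n \<ge> 1" using that by (simp add: Suc_le_eq)
    then have "F ((?k n)\<^sup>2) / real ((?k n)\<^sup>2) * (real ((?k n)\<^sup>2) / real n) - \<bar>c\<bar> * \<delta> n
        = (F ((?k n)\<^sup>2) - \<bar>c\<bar> * real (2 * ?k n + 1)) / real n"
      by (simp add: \<delta>_def diff_divide_distrib)
    also have "\<dots> \<le> F n / real n"
      using between(1)[of n] by (intro divide_right_mono) auto
    finally show ?thesis .
  qed
  have upper: "F n / real n \<le> F ((?k n + 1)\<^sup>2) / real ((?k n + 1)\<^sup>2) * (real ((?k n + 1)\<^sup>2) / real n) + \<bar>c\<bar> * \<delta> n"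
    if "n \<ge> 1" for n
  proof -
    have "F n / real n \<le> (F ((?k n + 1)\<^sup>2) + \<bar>c\<bar> * real (2 * ?k n + 1)) / real n"
      using between(2)[of n] by (intro divide_right_mono) auto
    also have "\<dots> = F ((?k n + 1)\<^sup>2) / real ((?k n + 1)\<^sup>2) * (real ((?k n + 1)\<^sup>2) / real n) + \<bar>c\<bar> * \<delta> n"
      using that by (simp add: \<delta>_def field_simps)
    finally show ?thesis .
  qed
  have \<delta>: "\<delta> \<longlonglongrightarrow> 0"
    unfolding \<delta>_def by (rule floor_sqrt_gap_tendsto_0)
  have at_squares: "(\<lambda>n. F ((?k n)\<^sup>2) / real ((?k n)\<^sup>2)) \<longlonglongrightarrow> L"
    by (rule filterlim_compose[OF squares filterlim_floor_sqrt_at_top])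
  have at_next_squares: "(\<lambda>n. F ((?k n + 1)\<^sup>2) / real ((?k n + 1)\<^sup>2)) \<longlonglongrightarrow> L"
    using filterlim_compose[OF LIMSEQ_Suc[OF squares] filterlim_floor_sqrt_at_top] by simp
  show ?thesis
  proof (rule tendsto_sandwich)
    show "\<forall>\<^sub>F n in sequentially. F ((?k n)\<^sup>2) / real ((?k n)\<^sup>2) * (real ((?k n)\<^sup>2) / real n) - \<bar>c\<bar> * \<delta> n
        \<le> F n / real n"
      using lower by (intro eventually_sequentiallyI[of 1])
    show "\<forall>\<^sub>F n in sequentially. F n / real n
        \<le> F ((?k n + 1)\<^sup>2) / real ((?k n + 1)\<^sup>2) * (real ((?k n + 1)\<^sup>2) / real n) + \<bar>c\<bar> * \<delta> n"
      using upper by (intro eventually_sequentiallyI[of 1])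
    show "(\<lambda>n. F ((?k n)\<^sup>2) / real ((?k n)\<^sup>2) * (real ((?k n)\<^sup>2) / real n) - \<bar>c\<bar> * \<delta> n) \<longlonglongrightarrow> L"
      using tendsto_diff[OF tendsto_mult[OF at_squares floor_sqrt_square_ratio_tendsto_1]
          tendsto_mult[OF tendsto_const \<delta>]] by simp
    show "(\<lambda>n. F ((?k n + 1)\<^sup>2) / real ((?k n + 1)\<^sup>2) * (real ((?k n + 1)\<^sup>2) / real n) + \<bar>c\<bar> * \<delta> n)
        \<longlonglongrightarrow> L"
      using tendsto_add[OF tendsto_mult[OF at_next_squares Suc_floor_sqrt_square_ratio_tendsto_1]
          tendsto_mult[OF tendsto_const \<delta>]] by simp
  qed
qed

section \<open>Efron--Stein inequality and product measures\<close>

lemma expectation_bind_pmf_finite: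
  fixes h :: "'b \<Rightarrow> real"
  assumes "finite (set_pmf p)" "\<And>x. x \<in> set_pmf p \<Longrightarrow> finite (set_pmf (f x))"
  shows "measure_pmf.expectation (p \<bind> f) h = measure_pmf.expectation p (\<lambda>x. measure_pmf.expectation (f x) h)"
proof -
  have "measure_pmf.expectation (p \<bind> f) h = (\<Sum>a\<in>set_pmf p. pmf p a *\<^sub>R measure_pmf.expectation (f a) h)"
    using assms by (intro pmf_expectation_bind) auto
  also have "\<dots> = measure_pmf.expectation p (\<lambda>x. measure_pmf.expectation (f x) h)"
    using assms by (intro integral_measure_pmf[symmetric]) auto
  finally show ?thesis .
qed

lemma abs_expectation_pmf_le:
  fixes u :: "'b \<Rightarrow> real"
  assumes "finite (set_pmf p)" "\<And>y. y \<in> set_pmf p \<Longrightarrow> \<bar>u y\<bar> \<le> c"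
  shows "\<bar>measure_pmf.expectation p u\<bar> \<le> c"
proof -
  have integrable: "integrable (measure_pmf p) u"
    using assms(1) by (rule integrable_measure_pmf_finite)
  have bounds: "u y \<le> c" "-c \<le> u y" if "y \<in> set_pmf p" for y
    using assms(2)[OF that] by linarith+
  have "measure_pmf.expectation p u \<le> measure_pmf.expectation p (\<lambda>_. c)"
    using bounds by (intro integral_mono_AE integrable) (auto simp: AE_measure_pmf_iff)
  moreover have "measure_pmf.expectation p (\<lambda>_. -c) \<le> measure_pmf.expectation p u"
    using bounds by (intro integral_mono_AE integrable) (auto simp: AE_measure_pmf_iff)
  ultimately show ?thesis by simp
qed

lemma expectation_pmf_square_shift:
  fixes F :: "'b \<Rightarrow> real"
  assumes "finite (set_pmf p)"
  shows "measure_pmf.expectation p (\<lambda>y. (F y - m)\<^sup>2)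
       = measure_pmf.expectation p (\<lambda>y. (F y - measure_pmf.expectation p F)\<^sup>2) + (measure_pmf.expectation p F - m)\<^sup>2"
proof -
  let ?E = "measure_pmf.expectation p"
  have integrable: "integrable (measure_pmf p) g" for g :: "'b \<Rightarrow> real"
    using assms by (rule integrable_measure_pmf_finite)
  have expand: "?E (\<lambda>y. (F y - t)\<^sup>2) = ?E (\<lambda>y. (F y)\<^sup>2) - 2 * t * ?E F + t\<^sup>2" for t
  proof -
    have "?E (\<lambda>y. (F y - t)\<^sup>2) = ?E (\<lambda>y. (F y)\<^sup>2 - 2 * t * F y + t\<^sup>2)"
      by (simp add: power2_eq_square algebra_simps)
    also have "\<dots> = ?E (\<lambda>y. (F y)\<^sup>2) - ?E (\<lambda>y. 2 * t * F y) + ?E (\<lambda>y. t\<^sup>2)"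
      using integrable by simp
    also have "\<dots> = ?E (\<lambda>y. (F y)\<^sup>2) - 2 * t * ?E F + t\<^sup>2"
      by simp
    finally show ?thesis .
  qed
  show ?thesis unfolding expand by (simp add: power2_eq_square algebra_simps)
qed

lemma Pi_pmf_insert_bind:
  assumes "finite B" "x \<notin> B"
  shows "Pi_pmf (insert x B) d P = Pi_pmf B d P \<bind> (\<lambda>g. map_pmf (\<lambda>y. g(x:=y)) (P x))"
  unfolding Pi_pmf_insert'[OF assms] map_pmf_def
  by (subst bind_commute_pmf) simp

lemma finite_set_pmf_Pi_pmf:
  fixes P :: "'k \<Rightarrow> 'a::finite pmf"
  assumes "finite A"
  shows "finite (set_pmf (Pi_pmf A d P))"
  by (rule finite_subset[OF set_Pi_pmf_subset'[OF assms]]) (use assms in auto)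

lemma expectation_pmf_square_le:
  fixes u :: "'b \<Rightarrow> real"
  assumes fin: "finite (set_pmf p)" and bounded_osc: "\<And>y y'. \<bar>u y - u y'\<bar> \<le> c"
  shows "measure_pmf.expectation p (\<lambda>y. (u y - m)\<^sup>2) \<le> c\<^sup>2 + (measure_pmf.expectation p u - m)\<^sup>2"
proof -
  let ?E = "measure_pmf.expectation p"
  have "(u y - ?E u)\<^sup>2 \<le> c\<^sup>2" for y
  proof -
    have "u y - ?E u = ?E (\<lambda>y'. u y - u y')"
      by (subst Bochner_Integration.integral_diff[OF integrable_measure_pmf_finite[OF fin]
            integrable_measure_pmf_finite[OF fin]]) simp
    also have "\<bar>\<dots>\<bar> \<le> c"
      by (intro abs_expectation_pmf_le fin bounded_osc)
    finally show ?thesis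
      using power_mono[of "\<bar>u y - ?E u\<bar>" c 2] by simp
  qed
  then have "\<bar>?E (\<lambda>y. (u y - ?E u)\<^sup>2)\<bar> \<le> c\<^sup>2"
    by (intro abs_expectation_pmf_le fin) simp
  then show ?thesis
    unfolding expectation_pmf_square_shift[OF fin, of u m] by simp
qed

text \<open>The Efron--Stein inequality for bounded differences, by induction on the coordinates: integrating
  out the last coordinate costs at most \<open>c\<^sup>2\<close> and leaves a function with the same bounded
  differences in the remaining ones.\<close>

lemma variance_Pi_pmf_bounded_differences:
  fixes P :: "'k \<Rightarrow> 'a::finite pmf" and f :: "('k \<Rightarrow> 'a) \<Rightarrow> real"
  assumes "finite A"
    and "\<And>g i v. i \<in> A \<Longrightarrow> \<bar>f (g(i := v)) - f g\<bar> \<le> c"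
  shows "measure_pmf.expectation (Pi_pmf A d P)
           (\<lambda>g. (f g - measure_pmf.expectation (Pi_pmf A d P) f)\<^sup>2) \<le> real (card A) * c\<^sup>2"
  using assms
proof (induction A arbitrary: f rule: finite_induct)
  case (insert x B)
  let ?Q = "Pi_pmf B d P" and ?E = "measure_pmf.expectation"
  define h where "h g = ?E (P x) (\<lambda>y. f (g(x := y)))" for g
  define m where "m = ?E ?Q h"
  have fin_Q: "finite (set_pmf ?Q)" and fin_P: "finite (set_pmf (P x))"
    using insert.hyps by (simp_all add: finite_set_pmf_Pi_pmf)
  have E_insert: "?E (Pi_pmf (insert x B) d P) u = ?E ?Q (\<lambda>g. ?E (P x) (\<lambda>y. u (g(x := y))))" for u :: "_ \<Rightarrow> real"
    unfolding Pi_pmf_insert_bind[OF insert.hyps]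
    by (subst expectation_bind_pmf_finite[OF fin_Q]) simp_all
  have "\<bar>h (g(i := v)) - h g\<bar> \<le> c" if "i \<in> B" for g i v
  proof -
    have "i \<noteq> x" using that insert.hyps by auto
    have "h (g(i := v)) - h g = ?E (P x) (\<lambda>y. f ((g(x := y))(i := v)) - f (g(x := y)))"
      unfolding h_def
      by (subst Bochner_Integration.integral_diff[OF integrable_measure_pmf_finite[OF fin_P]
            integrable_measure_pmf_finite[OF fin_P]]) (simp add: fun_upd_twist[OF \<open>i \<noteq> x\<close>])
    also have "\<bar>\<dots>\<bar> \<le> c"
      using insert.prems that by (intro abs_expectation_pmf_le fin_P) blast
    finally show ?thesis .
  qed
  then have IH: "?E ?Q (\<lambda>g. (h g - m)\<^sup>2) \<le> real (card B) * c\<^sup>2"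
    unfolding m_def by (rule insert.IH)
  have "\<bar>f (g(x := y)) - f (g(x := y'))\<bar> \<le> c" for g y y'
    using insert.prems[of x "g(x := y')" y] by (metis fun_upd_upd insertI1)
  then have step: "?E (P x) (\<lambda>y. (f (g(x := y)) - m)\<^sup>2) \<le> c\<^sup>2 + (h g - m)\<^sup>2" for g
    unfolding h_def by (rule expectation_pmf_square_le[OF fin_P])
  have "?E (Pi_pmf (insert x B) d P) (\<lambda>g. (f g - ?E (Pi_pmf (insert x B) d P) f)\<^sup>2)
      = ?E ?Q (\<lambda>g. ?E (P x) (\<lambda>y. (f (g(x := y)) - m)\<^sup>2))"
  proof -
    have "?E (Pi_pmf (insert x B) d P) f = m"
      unfolding E_insert m_def h_def ..
    then show ?thesis by (simp only: E_insert)
  qed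
  also have "\<dots> \<le> ?E ?Q (\<lambda>g. c\<^sup>2 + (h g - m)\<^sup>2)"
    by (intro integral_mono_AE integrable_measure_pmf_finite fin_Q) (use step in auto)
  also have "\<dots> = c\<^sup>2 + ?E ?Q (\<lambda>g. (h g - m)\<^sup>2)"
    using fin_Q by (simp add: integrable_measure_pmf_finite)
  also have "\<dots> \<le> real (card (insert x B)) * c\<^sup>2"
    using IH insert.hyps by (simp add: algebra_simps)
  finally show ?case .
qed simp

lemma (in prob_space) indep_sets_reindex:
  fixes F :: "'i \<Rightarrow> 'a set set" and \<sigma> :: "'j \<Rightarrow> 'i"
  assumes "indep_sets F UNIV" "inj \<sigma>"
  shows "indep_sets (\<lambda>j. F (\<sigma> j)) UNIV"
  unfolding indep_sets_def
proof (intro conjI ballI allI impI)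
  show "F (\<sigma> i) \<subseteq> events" for i using assms(1) by (auto simp: indep_sets_def)
  fix J :: "'j set" and A assume J: "J \<subseteq> UNIV" "J \<noteq> {}" "finite J" and A: "A \<in> Pi J (\<lambda>j. F (\<sigma> j))"
  define A' where "A' i = A (the_inv_into J \<sigma> i)" for i
  have inj_J: "inj_on \<sigma> J" using assms(2) by (rule inj_on_subset) simp
  have A'_eq: "A' (\<sigma> j) = A j" if "j \<in> J" for j
    unfolding A'_def using the_inv_into_f_f[OF inj_J that] by simp
  have "A' \<in> Pi (\<sigma> ` J) F"
  proof
    fix i assume "i \<in> \<sigma> ` J"
    then obtain j where j: "j \<in> J" "i = \<sigma> j" by blast
    show "A' i \<in> F i" using A j A'_eq[OF j(1)] by (auto simp: Pi_iff)
  qed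
  then have "prob (\<Inter>i\<in>\<sigma> ` J. A' i) = (\<Prod>i\<in>\<sigma> ` J. prob (A' i))"
  proof -
    have "\<sigma> ` J \<noteq> {}" "finite (\<sigma> ` J)" using J by auto
    moreover have ind: "\<And>K B. K \<noteq> {} \<Longrightarrow> finite K \<Longrightarrow> B \<in> Pi K F \<Longrightarrow> prob (\<Inter>j\<in>K. B j) = (\<Prod>j\<in>K. prob (B j))"
      using assms(1) unfolding indep_sets_def by simp
    ultimately show ?thesis using \<open>A' \<in> Pi (\<sigma> ` J) F\<close> by (intro ind) auto
  qed
  moreover have "(\<Inter>i\<in>\<sigma> ` J. A' i) = (\<Inter>j\<in>J. A j)"
    unfolding image_image using A'_eq by (intro INF_cong refl)
  moreover have "(\<Prod>i\<in>\<sigma> ` J. prob (A' i)) = (\<Prod>j\<in>J. prob (A j))"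
    by (simp add: prod.reindex[OF inj_J] A'_eq)
  ultimately show "prob (\<Inter>j\<in>J. A j) = (\<Prod>j\<in>J. prob (A j))" by simp
qed

lemma (in prob_space) indep_vars_reindex:
  assumes "indep_vars (\<lambda>_. N) Z UNIV" "inj \<sigma>"
  shows "indep_vars (\<lambda>_. N) (\<lambda>j. Z (\<sigma> j)) UNIV"
proof -
  have "indep_sets (\<lambda>i. sigma_sets (space M) {Z i -` A \<inter> space M |A. A \<in> sets N}) UNIV"
    using assms(1) unfolding indep_vars_def by simp
  then have "indep_sets (\<lambda>j. sigma_sets (space M) {Z (\<sigma> j) -` A \<inter> space M |A. A \<in> sets N}) UNIV"
    using indep_sets_reindex[OF _ assms(2)] by blast
  moreover have "random_variable N (Z i)" for i using assms(1) unfolding indep_vars_def by simp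
  ultimately show ?thesis unfolding indep_vars_def by simp
qed

lemma sets_PiM_count_space_finite:
  assumes "finite J"
  shows "sets (PiM J (\<lambda>_. count_space (UNIV :: 'a::finite set))) = Pow (PiE J (\<lambda>_. UNIV))"
proof (intro equalityI subsetI)
  show "S \<in> Pow (PiE J (\<lambda>_. UNIV))" if "S \<in> sets (PiM J (\<lambda>_. count_space (UNIV :: 'a set)))" for S
    using sets.sets_into_space[OF that] by (simp add: space_PiM)
  fix S assume S: "S \<in> Pow (PiE J (\<lambda>_. UNIV :: 'a set))"
  have "{g} \<in> sets (PiM J (\<lambda>_. count_space (UNIV :: 'a set)))" if "g \<in> S" for g
  proof -
    have "g \<in> extensional J" using that S by (auto simp: PiE_iff)
    then have "{g} = PiE J (\<lambda>j. {g j})" by (simp add: PiE_singleton)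
    also have "\<dots> \<in> sets (PiM J (\<lambda>_. count_space (UNIV :: 'a set)))"
      using assms by (intro sets_PiM_I_finite) auto
    finally show ?thesis .
  qed
  moreover have "finite S"
    using S assms by (intro finite_subset[OF _ finite_PiE]) auto
  ultimately show "S \<in> sets (PiM J (\<lambda>_. count_space (UNIV :: 'a set)))"
    using sets.finite_UN[of S "\<lambda>g. {g}"] by simp
qed

lemma borel_measurable_PiM_count_space_finite:
  assumes "finite J"
  shows "(u :: _ \<Rightarrow> real) \<in> borel_measurable (PiM J (\<lambda>_. count_space (UNIV :: 'a::finite set)))"
  by (rule measurableI) (auto simp: sets_PiM_count_space_finite[OF assms] space_PiM)

lemma PiM_measure_pmf_eq_distr_Pi_pmf:
  fixes p :: "'a pmf"
  assumes "finite J" "J \<noteq> {}"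
  shows "PiM J (\<lambda>_. measure_pmf p) = distr (measure_pmf (Pi_pmf J d (\<lambda>_. p))) (PiM J (\<lambda>_. count_space UNIV)) (\<lambda>f. restrict f J)"
proof -
  have "prob_space.indep_vars (measure_pmf (Pi_pmf J d (\<lambda>_. p))) (\<lambda>_. count_space UNIV) (\<lambda>x f. f x) J"
    using assms by (intro indep_vars_Pi_pmf)
  then have "distr (measure_pmf (Pi_pmf J d (\<lambda>_. p))) (PiM J (\<lambda>_. count_space UNIV)) (\<lambda>x. \<lambda>i\<in>J. x i)
      = PiM J (\<lambda>i. distr (measure_pmf (Pi_pmf J d (\<lambda>_. p))) (count_space UNIV) (\<lambda>f. f i))"
    using assms by (subst (asm) prob_space.indep_vars_iff_distr_eq_PiM'[OF measure_pmf.prob_space_axioms]) auto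
  also have "\<dots> = PiM J (\<lambda>_. measure_pmf p)"
  proof (rule PiM_cong[OF refl])
    fix i assume "i \<in> J"
    then have "map_pmf (\<lambda>f. f i) (Pi_pmf J d (\<lambda>_. p)) = p" using assms by (subst Pi_pmf_component) auto
    then show "distr (measure_pmf (Pi_pmf J d (\<lambda>_. p))) (count_space UNIV) (\<lambda>f. f i) = measure_pmf p"
      by (metis map_pmf_rep_eq)
  qed
  finally show ?thesis by simp
qed

section \<open>Random words\<close>

lemma finite_scoring_bounded:
  fixes R :: "'a::finite option \<Rightarrow> 'a option \<Rightarrow> real"
  obtains C where "\<And>u v. \<bar>R u v\<bar> \<le> C"
proof
  show "\<bar>R u v\<bar> \<le> (\<Sum>uv\<in>UNIV. \<bar>R (fst uv) (snd uv)\<bar>)" for u v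
    using member_le_sum[of "(u, v)" UNIV "\<lambda>uv. \<bar>R (fst uv) (snd uv)\<bar>"] by simp
qed

lemma (in prob_space) AE_imp_ex: "(AE x in M. P x) \<Longrightarrow> \<exists>x. P x"
  using AE_False eventually_mono by blast

text \<open>The two words are encoded as a single family indexed by \<open>nat + nat\<close>. Index \<open>0\<close> of each
  word is never read, but keeps \<open>word_indices n\<close> nonempty.\<close>

definition pair_opt_score :: "('a option \<Rightarrow> 'a option \<Rightarrow> real) \<Rightarrow> nat \<Rightarrow> (nat + nat \<Rightarrow> 'a) \<Rightarrow> real" where
  "pair_opt_score R n g = opt_score R n (\<lambda>i. g (Inl i)) (\<lambda>j. g (Inr j))"

definition word_indices :: "nat \<Rightarrow> (nat + nat) set" where
  "word_indices n = Inl ` {..n} \<union> Inr ` {..n}"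

definition shift_indices :: "nat \<Rightarrow> nat + nat \<Rightarrow> nat + nat" where
  "shift_indices m = map_sum (\<lambda>i. i + m) (\<lambda>j. j + m)"

lemma finite_word_indices: "finite (word_indices n)"
  and word_indices_nonempty: "word_indices n \<noteq> {}"
  by (auto simp: word_indices_def)

lemma card_word_indices: "card (word_indices n) = 2 * (n + 1)"
  unfolding word_indices_def by (subst card_Un_disjoint) (auto simp: card_image)

lemma inj_shift_indices: "inj (shift_indices m)"
proof (rule injI)
  show "shift_indices m k = shift_indices m k' \<Longrightarrow> k = k'" for k k'
    by (cases k; cases k') (simp_all add: shift_indices_def)
qed

lemma pair_opt_score_restrict: "pair_opt_score R n (restrict g (word_indices n)) = pair_opt_score R n g"
  unfolding pair_opt_score_def by (intro opt_score_cong) (auto simp: word_indices_def)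

lemma pair_opt_score_update:
  "(\<And>u v. \<bar>R u v\<bar> \<le> C) \<Longrightarrow> \<bar>pair_opt_score R n (g(k := a)) - pair_opt_score R n g\<bar> \<le> 4 * C"
proof (cases k)
  case (Inl i)
  then have "(\<lambda>i'. (g(k := a)) (Inl i')) = (\<lambda>i'. g (Inl i'))(i := a)" "(\<lambda>j. (g(k := a)) (Inr j)) = (\<lambda>j. g (Inr j))"
    by auto
  then show "(\<And>u v. \<bar>R u v\<bar> \<le> C) \<Longrightarrow> ?thesis"
    unfolding pair_opt_score_def by (simp add: opt_score_update_left)
next
  case (Inr j)
  then have "(\<lambda>j'. (g(k := a)) (Inr j')) = (\<lambda>j'. g (Inr j'))(j := a)" "(\<lambda>i. (g(k := a)) (Inl i)) = (\<lambda>i. g (Inl i))"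
    by auto
  then show "(\<And>u v. \<bar>R u v\<bar> \<le> C) \<Longrightarrow> ?thesis"
    unfolding pair_opt_score_def by (simp add: opt_score_update_right)
qed

locale iid_word_pair = prob_space M for M :: "'w measure" +
  fixes p :: "'a::finite pmf" and X Y :: "nat \<Rightarrow> 'w \<Rightarrow> 'a"
  assumes indep: "indep_vars (\<lambda>_. count_space UNIV) (\<lambda>k. case k of Inl i \<Rightarrow> X i | Inr j \<Rightarrow> Y j) UNIV"
    and distr_X: "\<And>i. distr M (count_space UNIV) (X i) = measure_pmf p"
    and distr_Y: "\<And>j. distr M (count_space UNIV) (Y j) = measure_pmf p"
begin

definition letter :: "nat + nat \<Rightarrow> 'w \<Rightarrow> 'a" where
  "letter k = (case k of Inl i \<Rightarrow> X i | Inr j \<Rightarrow> Y j)"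

lemma random_variable_letter: "random_variable (count_space UNIV) (letter k)"
  using indep unfolding indep_vars_def letter_def by simp

lemma distr_letter: "distr M (count_space UNIV) (letter k) = measure_pmf p"
  by (cases k) (simp_all add: letter_def distr_X distr_Y)

lemma distr_letters_eq_PiM:
  assumes "inj \<sigma>" "finite J" "J \<noteq> {}"
  shows "distr M (PiM J (\<lambda>_. count_space UNIV)) (\<lambda>\<omega>. \<lambda>j\<in>J. letter (\<sigma> j) \<omega>) = PiM J (\<lambda>_. measure_pmf p)"
proof -
  have "indep_vars (\<lambda>_. count_space UNIV) (\<lambda>j. letter (\<sigma> j)) UNIV"
    using indep_vars_reindex[OF indep[folded letter_def] assms(1)] .
  then have "indep_vars (\<lambda>_. count_space UNIV) (\<lambda>j. letter (\<sigma> j)) J"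
    by (rule indep_vars_subset) simp
  then have "distr M (PiM J (\<lambda>_. count_space UNIV)) (\<lambda>\<omega>. \<lambda>j\<in>J. letter (\<sigma> j) \<omega>)
     = PiM J (\<lambda>j. distr M (count_space UNIV) (letter (\<sigma> j)))"
    using assms(3) random_variable_letter by (subst (asm) indep_vars_iff_distr_eq_PiM) auto
  also have "\<dots> = PiM J (\<lambda>_. measure_pmf p)" by (simp add: distr_letter)
  finally show ?thesis .
qed

lemma integral_letters_eq_Pi_pmf:
  fixes u :: "(nat + nat \<Rightarrow> 'a) \<Rightarrow> real"
  assumes "inj \<sigma>" "finite J" "J \<noteq> {}" "\<And>f. u (restrict f J) = u f"
  shows "(\<lambda>\<omega>. u (\<lambda>j. letter (\<sigma> j) \<omega>)) \<in> borel_measurable M"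
    and "integrable M (\<lambda>\<omega>. u (\<lambda>j. letter (\<sigma> j) \<omega>))"
    and "(\<integral>\<omega>. u (\<lambda>j. letter (\<sigma> j) \<omega>) \<partial>M) = measure_pmf.expectation (Pi_pmf J undefined (\<lambda>_. p)) u"
proof -
  define \<Phi> where "\<Phi> \<omega> = (\<lambda>j\<in>J. letter (\<sigma> j) \<omega>)" for \<omega>
  have measurable_\<Phi>: "\<Phi> \<in> measurable M (PiM J (\<lambda>_. count_space UNIV))"
    unfolding \<Phi>_def by (intro measurable_restrict random_variable_letter)
  have measurable_u: "u \<in> borel_measurable (PiM J (\<lambda>_. count_space (UNIV::'a set)))"
    using assms(2) by (rule borel_measurable_PiM_count_space_finite)
  have u_\<Phi>: "u (\<lambda>j. letter (\<sigma> j) \<omega>) = u (\<Phi> \<omega>)" for \<omega>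
    unfolding \<Phi>_def using assms(4)[of "\<lambda>j. letter (\<sigma> j) \<omega>"] by simp
  have measurable_restrict: "(\<lambda>f. restrict f J) \<in> measurable (measure_pmf (Pi_pmf J undefined (\<lambda>_. p))) (PiM J (\<lambda>_. count_space UNIV))"
    by (simp add: space_PiM)
  have distr_eq: "distr M (PiM J (\<lambda>_. count_space UNIV)) \<Phi>
     = distr (measure_pmf (Pi_pmf J undefined (\<lambda>_. p))) (PiM J (\<lambda>_. count_space UNIV)) (\<lambda>f. restrict f J)"
    unfolding \<Phi>_def distr_letters_eq_PiM[OF assms(1-3)] using assms(2,3) by (rule PiM_measure_pmf_eq_distr_Pi_pmf)
  show "(\<lambda>\<omega>. u (\<lambda>j. letter (\<sigma> j) \<omega>)) \<in> borel_measurable M"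
    unfolding u_\<Phi> by (rule measurable_compose[OF measurable_\<Phi> measurable_u])
  have "integrable (measure_pmf (Pi_pmf J undefined (\<lambda>_. p))) (\<lambda>f. u (restrict f J))"
    using assms(2) by (intro integrable_measure_pmf_finite finite_set_pmf_Pi_pmf)
  then have "integrable (distr M (PiM J (\<lambda>_. count_space UNIV)) \<Phi>) u"
    unfolding distr_eq by (subst integrable_distr_eq[OF measurable_restrict measurable_u])
  then show "integrable M (\<lambda>\<omega>. u (\<lambda>j. letter (\<sigma> j) \<omega>))"
    unfolding u_\<Phi> by (subst (asm) integrable_distr_eq[OF measurable_\<Phi> measurable_u])
  have "(\<integral>\<omega>. u (\<lambda>j. letter (\<sigma> j) \<omega>) \<partial>M) = integral\<^sup>L (distr M (PiM J (\<lambda>_. count_space UNIV)) \<Phi>) u"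
    unfolding u_\<Phi> by (rule integral_distr[OF measurable_\<Phi> measurable_u, symmetric])
  also have "\<dots> = measure_pmf.expectation (Pi_pmf J undefined (\<lambda>_. p)) (\<lambda>f. u (restrict f J))"
    unfolding distr_eq by (rule integral_distr[OF measurable_restrict measurable_u])
  also have "\<dots> = measure_pmf.expectation (Pi_pmf J undefined (\<lambda>_. p)) u"
    using assms(4) by simp
  finally show "(\<integral>\<omega>. u (\<lambda>j. letter (\<sigma> j) \<omega>) \<partial>M) = measure_pmf.expectation (Pi_pmf J undefined (\<lambda>_. p)) u" .
qed

definition expected_opt_score :: "('a option \<Rightarrow> 'a option \<Rightarrow> real) \<Rightarrow> nat \<Rightarrow> real" where
  "expected_opt_score R n = measure_pmf.expectation (Pi_pmf (word_indices n) undefined (\<lambda>_. p)) (pair_opt_score R n)"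

lemma shifted_opt_score_integral:
  fixes R :: "'a option \<Rightarrow> 'a option \<Rightarrow> real" and m n :: nat
  defines "F \<equiv> \<lambda>\<omega>. opt_score R n (\<lambda>i. X (i + m) \<omega>) (\<lambda>j. Y (j + m) \<omega>)"
  shows "F \<in> borel_measurable M" and "integrable M F" and "(\<integral>\<omega>. F \<omega> \<partial>M) = expected_opt_score R n"
proof -
  have F_eq: "F = (\<lambda>\<omega>. pair_opt_score R n (\<lambda>k. letter (shift_indices m k) \<omega>))"
    by (simp add: F_def pair_opt_score_def letter_def shift_indices_def)
  note transfer = integral_letters_eq_Pi_pmf[where u="pair_opt_score R n" and J="word_indices n",
      OF inj_shift_indices finite_word_indices word_indices_nonempty pair_opt_score_restrict]
  show "F \<in> borel_measurable M" "integrable M F" "(\<integral>\<omega>. F \<omega> \<partial>M) = expected_opt_score R n"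
    unfolding F_eq expected_opt_score_def by (fact transfer)+
qed

lemma opt_score_integral:
  fixes R :: "'a option \<Rightarrow> 'a option \<Rightarrow> real" and n :: nat
  defines "F \<equiv> \<lambda>\<omega>. opt_score R n (\<lambda>i. X i \<omega>) (\<lambda>j. Y j \<omega>)"
  shows "F \<in> borel_measurable M" and "integrable M F" and "(\<integral>\<omega>. F \<omega> \<partial>M) = expected_opt_score R n"
  using shifted_opt_score_integral[of R n 0] by (simp_all add: F_def)

lemma opt_score_variance_le:
  fixes R :: "'a option \<Rightarrow> 'a option \<Rightarrow> real" and n :: nat
  assumes R: "\<And>u v. \<bar>R u v\<bar> \<le> C"
  defines "F \<equiv> \<lambda>\<omega>. opt_score R n (\<lambda>i. X i \<omega>) (\<lambda>j. Y j \<omega>)"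
  shows "integrable M (\<lambda>\<omega>. (F \<omega>)\<^sup>2)"
    and "(\<integral>\<omega>. (F \<omega> - expected_opt_score R n)\<^sup>2 \<partial>M) \<le> real (2 * (n + 1)) * (4 * C)\<^sup>2"
proof -
  have F_eq: "F \<omega> = pair_opt_score R n (\<lambda>k. letter k \<omega>)" for \<omega>
    by (simp add: F_def pair_opt_score_def letter_def)
  note transfer = integral_letters_eq_Pi_pmf[where J="word_indices n",
      OF inj_on_id[unfolded id_def] finite_word_indices word_indices_nonempty]
  show "integrable M (\<lambda>\<omega>. (F \<omega>)\<^sup>2)"
    unfolding F_eq using transfer(2)[of "\<lambda>g. (pair_opt_score R n g)\<^sup>2"] by (simp add: pair_opt_score_restrict)
  have "(\<integral>\<omega>. (F \<omega> - expected_opt_score R n)\<^sup>2 \<partial>M)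
      = measure_pmf.expectation (Pi_pmf (word_indices n) undefined (\<lambda>_. p))
          (\<lambda>g. (pair_opt_score R n g - expected_opt_score R n)\<^sup>2)"
    unfolding F_eq using transfer(3)[of "\<lambda>g. (pair_opt_score R n g - expected_opt_score R n)\<^sup>2"]
    by (simp add: pair_opt_score_restrict)
  also have "\<dots> \<le> real (card (word_indices n)) * (4 * C)\<^sup>2"
    unfolding expected_opt_score_def
    by (intro variance_Pi_pmf_bounded_differences finite_word_indices pair_opt_score_update[OF R])
  finally show "(\<integral>\<omega>. (F \<omega> - expected_opt_score R n)\<^sup>2 \<partial>M) \<le> real (2 * (n + 1)) * (4 * C)\<^sup>2"
    by (simp add: card_word_indices)
qed

lemma expected_opt_score_superadditive:
  "expected_opt_score R m + expected_opt_score R n \<le> expected_opt_score R (m + n)"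
proof -
  have "(\<integral>\<omega>. opt_score R m (\<lambda>i. X i \<omega>) (\<lambda>j. Y j \<omega>) + opt_score R n (\<lambda>i. X (i + m) \<omega>) (\<lambda>j. Y (j + m) \<omega>) \<partial>M)
      \<le> (\<integral>\<omega>. opt_score R (m + n) (\<lambda>i. X i \<omega>) (\<lambda>j. Y j \<omega>) \<partial>M)"
    by (intro integral_mono Bochner_Integration.integrable_add opt_score_integral
        shifted_opt_score_integral opt_score_superadditive)
  then show ?thesis
    by (simp add: opt_score_integral shifted_opt_score_integral)
qed

lemma abs_expected_opt_score_le:
  assumes "\<And>u v. \<bar>R u v\<bar> \<le> C"
  shows "\<bar>expected_opt_score R n\<bar> \<le> 3 * real n * C"
proof -
  have "\<bar>expected_opt_score R n\<bar> \<le> (\<integral>\<omega>. \<bar>opt_score R n (\<lambda>i. X i \<omega>) (\<lambda>j. Y j \<omega>)\<bar> \<partial>M)"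
    unfolding opt_score_integral(3)[symmetric] by (rule integral_abs_bound)
  also have "\<dots> \<le> (\<integral>\<omega>. 3 * real n * C \<partial>M)"
    by (intro integral_mono Bochner_Integration.integrable_abs opt_score_integral opt_score_abs_le assms)
      simp
  finally show ?thesis by (simp add: prob_space)
qed

definition opt_score_rate :: "('a option \<Rightarrow> 'a option \<Rightarrow> real) \<Rightarrow> real" where
  "opt_score_rate R = (SUP n\<in>{1..}. expected_opt_score R n / real n)"

lemma expected_opt_score_tendsto: "(\<lambda>n. expected_opt_score R n / real n) \<longlonglongrightarrow> opt_score_rate R"
proof -
  obtain C where C: "\<And>u v. \<bar>R u v\<bar> \<le> C" using finite_scoring_bounded by meson
  show ?thesis
    unfolding opt_score_rate_def
  proof (rule Fekete_superadditive)
    show "expected_opt_score R m + expected_opt_score R n \<le> expected_opt_score R (m + n)" for m n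
      by (rule expected_opt_score_superadditive)
    show "\<bar>expected_opt_score R n\<bar> \<le> 3 * C * real n" for n
      using abs_expected_opt_score_le[OF C, where n=n] by (simp add: mult_ac)
  qed
qed

lemma prob_opt_score_deviation_le:
  assumes R: "\<And>u v. \<bar>R u v\<bar> \<le> C" and "e > 0" and "n \<ge> 1"
  shows "prob {\<omega> \<in> space M. e * real n \<le> \<bar>opt_score R n (\<lambda>i. X i \<omega>) (\<lambda>j. Y j \<omega>) - expected_opt_score R n\<bar>}
    \<le> 64 * C\<^sup>2 / (e\<^sup>2 * real n)"
proof -
  define F where "F \<omega> = opt_score R n (\<lambda>i. X i \<omega>) (\<lambda>j. Y j \<omega>)" for \<omega>
  have F: "F \<in> borel_measurable M" "expectation F = expected_opt_score R n"
    unfolding F_def by (simp_all add: opt_score_integral)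
  have "prob {\<omega> \<in> space M. e * real n \<le> \<bar>F \<omega> - expectation F\<bar>} \<le> variance F / (e * real n)\<^sup>2"
    using \<open>e > 0\<close> \<open>n \<ge> 1\<close> opt_score_variance_le(1)[OF R]
    by (intro Chebyshev_inequality F(1)) (auto simp: F_def)
  also have "\<dots> \<le> real (2 * (n + 1)) * (4 * C)\<^sup>2 / (e * real n)\<^sup>2"
    using opt_score_variance_le(2)[OF R] by (intro divide_right_mono) (auto simp: F_def F(2))
  also have "\<dots> \<le> real (4 * n) * (4 * C)\<^sup>2 / (e * real n)\<^sup>2"
    using \<open>n \<ge> 1\<close> by (intro divide_right_mono mult_right_mono) auto
  also have "\<dots> = 64 * C\<^sup>2 / (e\<^sup>2 * real n)"
    using \<open>n \<ge> 1\<close> \<open>e > 0\<close> by (simp add: field_simps power2_eq_square)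
  finally show ?thesis
    by (simp add: F(2) F_def)
qed

lemma AE_opt_score_squares_deviation:
  assumes "e > 0"
  shows "AE \<omega> in M. \<forall>\<^sub>F k in sequentially.
    \<bar>opt_score R (k\<^sup>2) (\<lambda>i. X i \<omega>) (\<lambda>j. Y j \<omega>) - expected_opt_score R (k\<^sup>2)\<bar> < e * real (k\<^sup>2)"
proof -
  obtain C where C: "\<And>u v. \<bar>R u v\<bar> \<le> C" using finite_scoring_bounded by meson
  define F where "F k \<omega> = opt_score R (k\<^sup>2) (\<lambda>i. X i \<omega>) (\<lambda>j. Y j \<omega>)" for k \<omega>
  define A where "A k = {\<omega> \<in> space M. e * real (k\<^sup>2) \<le> \<bar>F k \<omega> - expected_opt_score R (k\<^sup>2)\<bar>}" for k
  have [measurable]: "F k \<in> borel_measurable M" for k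
    unfolding F_def by (rule opt_score_integral)
  have A_sets: "A k \<in> sets M" for k
    unfolding A_def by measurable
  have bound: "norm (measure M (A k)) \<le> 64 * C\<^sup>2 / e\<^sup>2 * inverse (real k ^ 2)" if "k \<ge> 1" for k
  proof -
    have "measure M (A k) \<le> 64 * C\<^sup>2 / (e\<^sup>2 * real (k\<^sup>2))"
      unfolding A_def F_def using that by (intro prob_opt_score_deviation_le[OF C \<open>e > 0\<close>]) simp
    also have "\<dots> = 64 * C\<^sup>2 / e\<^sup>2 * inverse (real k ^ 2)"
      by (simp add: divide_inverse)
    finally show ?thesis by simp
  qed
  have "summable (\<lambda>k. 64 * C\<^sup>2 / e\<^sup>2 * inverse (real k ^ 2))"
    by (intro summable_mult inverse_power_summable) simp
  then have "summable (\<lambda>k. measure M (A k))"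
    by (rule summable_comparison_test'[where N=1]) (rule bound)
  then have "AE \<omega> in M. \<forall>\<^sub>F k in sequentially. \<omega> \<in> space M - A k"
    by (intro borel_cantelli_AE1 A_sets) (auto simp: less_top[symmetric])
  then show ?thesis
    by (rule AE_mp) (intro AE_I2 impI, elim eventually_mono, simp add: A_def F_def not_le)
qed

lemma AE_opt_score_squares_tendsto:
  "AE \<omega> in M. (\<lambda>k. opt_score R (k\<^sup>2) (\<lambda>i. X i \<omega>) (\<lambda>j. Y j \<omega>) / real (k\<^sup>2)) \<longlonglongrightarrow> opt_score_rate R"
proof -
  have "AE \<omega> in M. \<forall>j. \<forall>\<^sub>F k in sequentially.
      \<bar>opt_score R (k\<^sup>2) (\<lambda>i. X i \<omega>) (\<lambda>j. Y j \<omega>) - expected_opt_score R (k\<^sup>2)\<bar> < inverse (real (Suc j)) * real (k\<^sup>2)"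
    by (subst AE_all_countable) (intro allI AE_opt_score_squares_deviation, simp)
  then show ?thesis
  proof (rule AE_mp, intro AE_I2 impI)
    fix \<omega>
    define F where "F k = opt_score R (k\<^sup>2) (\<lambda>i. X i \<omega>) (\<lambda>j. Y j \<omega>)" for k
    define E where "E k = expected_opt_score R (k\<^sup>2)" for k
    assume close: "\<forall>j. \<forall>\<^sub>F k in sequentially. \<bar>F k - E k\<bar> < inverse (real (Suc j)) * real (k\<^sup>2)"
    have "(\<lambda>k. F k / real (k\<^sup>2) - E k / real (k\<^sup>2)) \<longlonglongrightarrow> 0"
    proof (rule tendstoI)
      fix r :: real assume "r > 0"
      then obtain j where j: "inverse (real (Suc j)) < r" using reals_Archimedean by blast
      show "\<forall>\<^sub>F k in sequentially. dist (F k / real (k\<^sup>2) - E k / real (k\<^sup>2)) 0 < r"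
        using close[rule_format, of j]
      proof eventually_elim
        case (elim k)
        have "0 < inverse (real (Suc j)) * real (k\<^sup>2)"
          using elim abs_ge_zero order_le_less_trans by blast
        then have "real (k\<^sup>2) > 0"
          by (simp add: zero_less_mult_iff)
        with elim have "\<bar>F k - E k\<bar> / real (k\<^sup>2) < inverse (real (Suc j))"
          by (simp add: divide_less_eq del: of_nat_power)
        with j show ?case
          by (simp add: dist_real_def diff_divide_distrib[symmetric] abs_divide del: of_nat_power)
      qed
    qed
    moreover have "filterlim (\<lambda>k::nat. k\<^sup>2) sequentially sequentially"
      by (intro filterlim_subseq strict_monoI power_strict_mono) auto
    then have "(\<lambda>k. E k / real (k\<^sup>2)) \<longlonglongrightarrow> opt_score_rate R"
      unfolding E_def by (rule filterlim_compose[OF expected_opt_score_tendsto])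
    ultimately show "(\<lambda>k. F k / real (k\<^sup>2)) \<longlonglongrightarrow> opt_score_rate R"
      using tendsto_add[of "\<lambda>k. F k / real (k\<^sup>2) - E k / real (k\<^sup>2)" 0 _ "\<lambda>k. E k / real (k\<^sup>2)"]
      by simp
  qed
qed

lemma AE_opt_score_tendsto:
  "AE \<omega> in M. (\<lambda>n. opt_score R n (\<lambda>i. X i \<omega>) (\<lambda>j. Y j \<omega>) / real n) \<longlonglongrightarrow> opt_score_rate R"
  using AE_opt_score_squares_tendsto[of R]
proof eventually_elim
  case (elim \<omega>)
  obtain C where C: "\<And>u v. \<bar>R u v\<bar> \<le> C" using finite_scoring_bounded by meson
  show ?case
  proof (rule tendsto_divide_of_tendsto_squares[OF elim])
    fix m n
    have "opt_score R m (\<lambda>i. X i \<omega>) (\<lambda>j. Y j \<omega>) + opt_score R n (\<lambda>i. X (i + m) \<omega>) (\<lambda>j. Y (j + m) \<omega>)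
        \<le> opt_score R (m + n) (\<lambda>i. X i \<omega>) (\<lambda>j. Y j \<omega>)"
      by (rule opt_score_superadditive)
    moreover have "\<bar>opt_score R n (\<lambda>i. X (i + m) \<omega>) (\<lambda>j. Y (j + m) \<omega>)\<bar> \<le> 3 * real n * C"
      by (rule opt_score_abs_le[OF C])
    ultimately show "opt_score R m (\<lambda>i. X i \<omega>) (\<lambda>j. Y j \<omega>) - 3 * C * real n
        \<le> opt_score R (m + n) (\<lambda>i. X i \<omega>) (\<lambda>j. Y j \<omega>)"
      by (simp add: abs_le_iff mult_ac)
  qed
qed

lemma lcs_const_eq_opt_score_rate: "lcs_const M X Y R = opt_score_rate R"
  unfolding lcs_const_def
proof (rule the_equality)
  fix l assume "AE \<omega> in M. (\<lambda>n. opt_score R n (\<lambda>i. X i \<omega>) (\<lambda>j. Y j \<omega>) / real n) \<longlonglongrightarrow> l"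
  then have "AE \<omega> in M. l = opt_score_rate R"
    using AE_opt_score_tendsto by eventually_elim (rule LIMSEQ_unique)
  then show "l = opt_score_rate R"
    using AE_imp_ex by blast
qed (rule AE_opt_score_tendsto)

lemma abs_opt_score_rate_diff_le:
  assumes "\<And>u v. \<bar>R u v - R' u v\<bar> \<le> c"
  shows "\<bar>opt_score_rate R - opt_score_rate R'\<bar> \<le> 3 * c"
proof -
  obtain \<omega> where
    "(\<lambda>n. opt_score R n (\<lambda>i. X i \<omega>) (\<lambda>j. Y j \<omega>) / real n) \<longlonglongrightarrow> opt_score_rate R"
    "(\<lambda>n. opt_score R' n (\<lambda>i. X i \<omega>) (\<lambda>j. Y j \<omega>) / real n) \<longlonglongrightarrow> opt_score_rate R'"
    using AE_imp_ex[OF AE_conjI[OF AE_opt_score_tendsto AE_opt_score_tendsto]] by blast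
  then have "(\<lambda>n. \<bar>opt_score R n (\<lambda>i. X i \<omega>) (\<lambda>j. Y j \<omega>) / real n - opt_score R' n (\<lambda>i. X i \<omega>) (\<lambda>j. Y j \<omega>) / real n\<bar>)
      \<longlonglongrightarrow> \<bar>opt_score_rate R - opt_score_rate R'\<bar>"
    by (intro tendsto_intros)
  moreover have "\<bar>opt_score R n x y / real n - opt_score R' n x y / real n\<bar> \<le> 3 * c" for n x y
  proof (cases "n = 0")
    case False
    then show ?thesis
      using opt_score_diff_abs_le[OF assms, where n=n and x=x and y=y]
      by (simp add: diff_divide_distrib[symmetric] abs_divide divide_le_eq mult_ac)
  qed (use assms[of None None] in simp)
  ultimately show ?thesis
    using LIMSEQ_le_const2 by blast
qed

end

lemma abs_scoring_combination_diff_le: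
  fixes S T :: "'a option \<Rightarrow> 'a option \<Rightarrow> real" and v v' :: "real \<times> real"
  assumes S: "\<And>u w. \<bar>S u w\<bar> \<le> C\<^sub>S" and T: "\<And>u w. \<bar>T u w\<bar> \<le> C\<^sub>T"
  shows "\<bar>(fst v * S u w + snd v * T u w) - (fst v' * S u w + snd v' * T u w)\<bar> \<le> (C\<^sub>S + C\<^sub>T) * dist v v'"
proof -
  have "\<bar>fst z\<bar> \<le> norm z" "\<bar>snd z\<bar> \<le> norm z" for z :: "real \<times> real"
    using norm_fst_le[of "fst z" "snd z"] norm_snd_le[of "snd z" "fst z"] by simp_all
  from this[of "v - v'"] have "\<bar>fst v - fst v'\<bar> \<le> dist v v'" "\<bar>snd v - snd v'\<bar> \<le> dist v v'"
    by (simp_all add: dist_norm)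
  then have "\<bar>(fst v - fst v') * S u w\<bar> \<le> dist v v' * C\<^sub>S" "\<bar>(snd v - snd v') * T u w\<bar> \<le> dist v v' * C\<^sub>T"
    unfolding abs_mult using S[of u w] T[of u w] by (auto intro!: mult_mono)
  then show ?thesis by (simp add: abs_le_iff algebra_simps)
qed

lemma score_set_Hausdorff_limit:
  fixes S T :: "'a::finite option \<Rightarrow> 'a option \<Rightarrow> real"
  assumes uniform: "\<And>e. e > 0 \<Longrightarrow>
    \<forall>\<^sub>F n in sequentially. \<forall>v\<in>sphere 0 1. \<bar>support_function (score_set S T n x y) v - g v\<bar> < e"
  shows "halfspaces_Inter g \<noteq> {}" and "compact (halfspaces_Inter g)"
    and "(\<lambda>n. hausdist (score_set S T n x y) (halfspaces_Inter g)) \<longlonglongrightarrow> 0"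
proof -
  obtain C\<^sub>S C\<^sub>T where "\<And>u v. \<bar>S u v\<bar> \<le> C\<^sub>S" "\<And>u v. \<bar>T u v\<bar> \<le> C\<^sub>T"
    using finite_scoring_bounded by meson
  then have "bounded (\<Union>n. score_set S T n x y)"
    using score_set_subset_cball by (meson UN_least bounded_cball bounded_subset)
  note limit = compact_score_set convex_score_set score_set_nonempty this uniform
  show "halfspaces_Inter g \<noteq> {}"
    by (rule halfspaces_Inter_nonempty[OF limit])
  show "compact (halfspaces_Inter g)"
    by (rule compact_halfspaces_Inter[OF limit])
  show "(\<lambda>n. hausdist (score_set S T n x y) (halfspaces_Inter g)) \<longlonglongrightarrow> 0"
    by (rule hausdist_tendsto_halfspaces_Inter[OF limit])
qed

context iid_word_pair
begin

definition rate_support :: "('a option \<Rightarrow> 'a option \<Rightarrow> real) \<Rightarrow> ('a option \<Rightarrow> 'a option \<Rightarrow> real)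
    \<Rightarrow> real \<times> real \<Rightarrow> real" where
  "rate_support S T v = opt_score_rate (\<lambda>u w. fst v * S u w + snd v * T u w)"

lemma abs_rate_support_diff_le:
  assumes "\<And>u w. \<bar>S u w\<bar> \<le> C\<^sub>S" "\<And>u w. \<bar>T u w\<bar> \<le> C\<^sub>T"
  shows "\<bar>rate_support S T v - rate_support S T v'\<bar> \<le> 3 * (C\<^sub>S + C\<^sub>T) * dist v v'"
proof -
  have "\<bar>opt_score_rate (\<lambda>u w. fst v * S u w + snd v * T u w)
      - opt_score_rate (\<lambda>u w. fst v' * S u w + snd v' * T u w)\<bar> \<le> 3 * ((C\<^sub>S + C\<^sub>T) * dist v v')"
    by (rule abs_opt_score_rate_diff_le) (rule abs_scoring_combination_diff_le[OF assms])
  then show ?thesis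
    unfolding rate_support_def by (simp add: algebra_simps)
qed

text \<open>Pointwise convergence holds almost surely on a countable dense set of directions at once; the
  common Lipschitz bound upgrades it to uniform convergence on the unit circle.\<close>

lemma AE_score_set_support_uniform:
  "AE \<omega> in M. \<forall>e>0. \<forall>\<^sub>F n in sequentially. \<forall>v\<in>sphere 0 1.
     \<bar>support_function (score_set S T n (\<lambda>i. X i \<omega>) (\<lambda>j. Y j \<omega>)) v - rate_support S T v\<bar> < e"
proof -
  obtain C\<^sub>S C\<^sub>T where S: "\<And>u v. \<bar>S u v\<bar> \<le> C\<^sub>S" and T: "\<And>u v. \<bar>T u v\<bar> \<le> C\<^sub>T"
    using finite_scoring_bounded by meson
  have lipschitz_support: "\<bar>support_function (score_set S T n x y) v - support_function (score_set S T n x y) v'\<bar>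
      \<le> 3 * (C\<^sub>S + C\<^sub>T) * dist v v'" for n x y v v'
    by (intro support_function_lipschitz compact_score_set score_set_nonempty score_set_subset_cball S T)
  obtain D :: "(real \<times> real) set" where D: "countable D" "\<And>U. open U \<Longrightarrow> U \<noteq> {} \<Longrightarrow> \<exists>d\<in>D. d \<in> U"
    using countable_dense_setE by blast
  have D_dense: "\<exists>d\<in>D. dist d v < r" if "r > 0" for v r
    using D(2)[of "ball v r"] that by (auto simp: dist_commute)
  have support_eq: "support_function (score_set S T n x y) v
      = opt_score (\<lambda>u w. fst v * S u w + snd v * T u w) n x y / real n" for n x y v
    using support_function_score_set[of S T n x y "fst v" "snd v"] by simp
  have "AE \<omega> in M. \<forall>d\<in>D. (\<lambda>n. support_function (score_set S T n (\<lambda>i. X i \<omega>) (\<lambda>j. Y j \<omega>)) d)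
      \<longlonglongrightarrow> rate_support S T d"
    unfolding support_eq rate_support_def using D(1)
    by (intro AE_ball_countable[THEN iffD2] ballI AE_opt_score_tendsto)
  then show ?thesis
  proof eventually_elim
    case (elim \<omega>)
    show ?case
    proof (intro allI impI)
      fix e :: real assume "e > 0"
      show "\<forall>\<^sub>F n in sequentially. \<forall>v\<in>sphere 0 1.
          \<bar>support_function (score_set S T n (\<lambda>i. X i \<omega>) (\<lambda>j. Y j \<omega>)) v - rate_support S T v\<bar> < e"
        by (rule eventually_uniformly_close_if_equi_Lipschitz[where D=D and L="3 * (C\<^sub>S + C\<^sub>T)"])
          (use D_dense lipschitz_support abs_rate_support_diff_le[OF S T] elim \<open>e > 0\<close> in auto)
    qed
  qed
qed

lemma halfspaces_Inter_rate_support: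
  "halfspaces_Inter (rate_support S T) \<noteq> {}" "compact (halfspaces_Inter (rate_support S T))"
proof -
  obtain \<omega> where "\<forall>e>0. \<forall>\<^sub>F n in sequentially. \<forall>v\<in>sphere 0 1.
      \<bar>support_function (score_set S T n (\<lambda>i. X i \<omega>) (\<lambda>j. Y j \<omega>)) v - rate_support S T v\<bar> < e"
    using AE_imp_ex[OF AE_score_set_support_uniform] by blast
  from score_set_Hausdorff_limit[OF this[rule_format]]
  show "halfspaces_Inter (rate_support S T) \<noteq> {}" "compact (halfspaces_Inter (rate_support S T))"
    by blast+
qed

lemma AE_score_set_hausdist_tendsto:
  "AE \<omega> in M. (\<lambda>n. hausdist (score_set S T n (\<lambda>i. X i \<omega>) (\<lambda>j. Y j \<omega>)) (halfspaces_Inter (rate_support S T)))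
     \<longlonglongrightarrow> 0"
  using AE_score_set_support_uniform
  by eventually_elim (rule score_set_Hausdorff_limit(3), blast)

end

theorem mainTheorem8:
  fixes M :: "'w measure" and p :: "'a::finite pmf"
    and X Y :: "nat \<Rightarrow> 'w \<Rightarrow> 'a"
    and S T :: "'a option \<Rightarrow> 'a option \<Rightarrow> real"
  assumes "prob_space M"
    and "prob_space.indep_vars M (\<lambda>_. count_space UNIV)
           (\<lambda>k. case k of Inl i \<Rightarrow> X i | Inr j \<Rightarrow> Y j) UNIV"
    and "\<And>i. distr M (count_space UNIV) (X i) = measure_pmf p"
    and "\<And>j. distr M (count_space UNIV) (Y j) = measure_pmf p"
    and "symmetric_scoring S" and "symmetric_scoring T"
  shows "\<exists>K :: (real \<times> real) set. K \<noteq> {} \<and> compact K \<and> convex K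
     \<and> (AE w in M. (\<lambda>n. hausdist (score_set S T n (\<lambda>i. X i w) (\<lambda>j. Y j w)) K) \<longlonglongrightarrow> 0)
     \<and> (\<forall>a b :: real.
          (\<forall>n\<ge>1. \<forall>w\<in>space M.
             (SUP z\<in>score_set S T n (\<lambda>i. X i w) (\<lambda>j. Y j w). a * fst z + b * snd z)
               = opt_score (\<lambda>u v. a * S u v + b * T u v) n (\<lambda>i. X i w) (\<lambda>j. Y j w) / real n)
        \<and> (AE w in M. (\<lambda>n. opt_score (\<lambda>u v. a * S u v + b * T u v) n (\<lambda>i. X i w) (\<lambda>j. Y j w) / real n)
             \<longlonglongrightarrow> lcs_const M X Y (\<lambda>u v. a * S u v + b * T u v)))"
proof -
  interpret iid_word_pair M p X Y
    using assms(1-4) by (intro iid_word_pair.intro iid_word_pair_axioms.intro) auto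
  show ?thesis
  proof (intro exI[of _ "halfspaces_Inter (rate_support S T)"] conjI allI impI ballI)
    show "halfspaces_Inter (rate_support S T) \<noteq> {}" "compact (halfspaces_Inter (rate_support S T))"
      by (fact halfspaces_Inter_rate_support)+
    show "convex (halfspaces_Inter (rate_support S T))"
      by (rule convex_halfspaces_Inter)
    show "AE w in M. (\<lambda>n. hausdist (score_set S T n (\<lambda>i. X i w) (\<lambda>j. Y j w)) (halfspaces_Inter (rate_support S T)))
        \<longlonglongrightarrow> 0"
      by (rule AE_score_set_hausdist_tendsto)
    fix a b :: real and n w
    show "(SUP z\<in>score_set S T n (\<lambda>i. X i w) (\<lambda>j. Y j w). a * fst z + b * snd z)
        = opt_score (\<lambda>u v. a * S u v + b * T u v) n (\<lambda>i. X i w) (\<lambda>j. Y j w) / real n"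
      using support_function_score_set by (simp add: support_function_def inner_Pair_eq)
    show "AE w in M. (\<lambda>n. opt_score (\<lambda>u v. a * S u v + b * T u v) n (\<lambda>i. X i w) (\<lambda>j. Y j w) / real n)
        \<longlonglongrightarrow> lcs_const M X Y (\<lambda>u v. a * S u v + b * T u v)"
      unfolding lcs_const_eq_opt_score_rate by (rule AE_opt_score_tendsto)
  qed
qed

end
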